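(* Let $\mathcal{M}$ be a category with finite products, regarded as a symmetric monoidal category $(\mathcal{M},\times,1)$ via a choice of binary products and a terminal object $1$. Then there is an isomorphism of categories \[ \mathbf{SColax}\big((\Phi,+,0),(\mathcal{M},\times,1)\big)\;\cong\;[\Gamma^{\mathrm{op}},\mathcal{M}]. \]
   Context: $\Phi$ is the skeletal category of finite sets: its objects are the sets $n=\{0,\dots,n-1\}$ for $n\ge 0$ and its morphisms are all functions; it is a symmetric monoidal category under disjoint union $+$ (with $m+n$ identified with $\{0,\dots,m+n-1\}$ in the evident order-preserving way on each summand) and unit $0=\emptyset$. $\Gamma^{\mathrm{op}}$ is the skeletal category of finite based sets: objects $[n]=\{0,1,\dots,n\}$ for $n\ge 0$, morphisms $[m]\to[n]$ the functions $g$ with $g(0)=0$. $[\Gamma^{\mathrm{op}},\mathcal{M}]$ is the category of functors $\Gamma^{\mathrm{op}}\to\mathcal{M}$ and natural transformations. A colax symmetric monoidal functor $(X,\xi):(\mathcal{L},\otimes,I)\to(\mathcal{M},\otimes,I)$ between symmetric monoidal categories is a functor $X$ together with morphisms $\xi_{A,B}:X(A\otimes B)\to X(A)\otimes X(B)$, natural in $A,B$, and $\xi_0:X(I)\to I$ (not required to be invertible), satisfying the usual coassociativity and counit axioms of a monoidal functor (with these maps in place of isomorphisms) and compatibility with the symmetries. A monoidal transformation $\sigma:(W,\omega)\to(X,\xi)$ is a natural transformation $\sigma:W\to X$ with $\xi_{A,B}\circ\sigma_{A\otimes B}=(\sigma_A\otimes\sigma_B)\circ\omega_{A,B}$ and $\xi_0\circ\sigma_I=\omega_0$.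 $\mathbf{SColax}(\mathcal{L},\mathcal{M})$ denotes the category of colax symmetric monoidal functors and monoidal transformations. *)

theory Defs
  imports "HOL-Library.FuncSet"
begin

record ('o,'m) cat =
  Obj  :: "'o set"
  Arr  :: "'m set"
  Dom  :: "'m \<Rightarrow> 'o"
  Cod  :: "'m \<Rightarrow> 'o"
  Ide  :: "'o \<Rightarrow> 'm"
  Comp :: "'m \<Rightarrow> 'm \<Rightarrow> 'm"   (* Comp C g f = g \<circ> f *)

definition hom :: "('o,'m) cat \<Rightarrow> 'o \<Rightarrow> 'o \<Rightarrow> 'm set" where
  "hom C a b = {f \<in> Arr C. Dom C f = a \<and> Cod C f = b}"

definition category :: "('o,'m) cat \<Rightarrow> bool" where
  "category C \<longleftrightarrow>
    (\<forall>f\<in>Arr C. Dom C f \<in> Obj C \<and> Cod C f \<in> Obj C) \<and>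
    (\<forall>a\<in>Obj C. Ide C a \<in> hom C a a) \<and>
    (\<forall>f\<in>Arr C. \<forall>g\<in>Arr C. Cod C f = Dom C g \<longrightarrow> Comp C g f \<in> hom C (Dom C f) (Cod C g)) \<and>
    (\<forall>f\<in>Arr C. Comp C (Ide C (Cod C f)) f = f \<and> Comp C f (Ide C (Dom C f)) = f) \<and>
    (\<forall>f\<in>Arr C. \<forall>g\<in>Arr C. \<forall>h\<in>Arr C. Cod C f = Dom C g \<and> Cod C g = Dom C h \<longrightarrow>
        Comp C h (Comp C g f) = Comp C (Comp C h g) f)"

definition is_functor :: "('a,'c) cat \<Rightarrow> ('b,'d) cat \<Rightarrow> ('a \<Rightarrow> 'b) \<times> ('c \<Rightarrow> 'd) \<Rightarrow> bool" where
  "is_functor C D F \<longleftrightarrow>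
    (\<forall>a\<in>Obj C. fst F a \<in> Obj D) \<and>
    (\<forall>f\<in>Arr C. snd F f \<in> hom D (fst F (Dom C f)) (fst F (Cod C f))) \<and>
    (\<forall>a\<in>Obj C. snd F (Ide C a) = Ide D (fst F a)) \<and>
    (\<forall>f\<in>Arr C. \<forall>g\<in>Arr C. Cod C f = Dom C g \<longrightarrow>
        snd F (Comp C g f) = Comp D (snd F g) (snd F f))"

text \<open>Extensionality (values outside the source category are fixed), so that functors
  are represented uniquely.\<close>

definition ext_functor :: "('a,'c) cat \<Rightarrow> ('a \<Rightarrow> 'b) \<times> ('c \<Rightarrow> 'd) \<Rightarrow> bool" where
  "ext_functor C F \<longleftrightarrow>
    (\<forall>a. a \<notin> Obj C \<longrightarrow> fst F a = undefined) \<and> (\<forall>f. f \<notin> Arr C \<longrightarrow> snd F f = undefined)"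

definition nat_trans ::
  "('a,'c) cat \<Rightarrow> ('b,'d) cat \<Rightarrow> ('a \<Rightarrow> 'b) \<times> ('c \<Rightarrow> 'd) \<Rightarrow> ('a \<Rightarrow> 'b) \<times> ('c \<Rightarrow> 'd)
     \<Rightarrow> ('a \<Rightarrow> 'd) \<Rightarrow> bool" where
  "nat_trans C D F G \<sigma> \<longleftrightarrow>
    (\<forall>a\<in>Obj C. \<sigma> a \<in> hom D (fst F a) (fst G a)) \<and>
    (\<forall>f\<in>Arr C. Comp D (snd G f) (\<sigma> (Dom C f)) = Comp D (\<sigma> (Cod C f)) (snd F f)) \<and>
    (\<forall>a. a \<notin> Obj C \<longrightarrow> \<sigma> a = undefined)"

definition funcat :: "('a,'c) cat \<Rightarrow> ('b,'d) cat \<Rightarrow>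
   (('a \<Rightarrow> 'b) \<times> ('c \<Rightarrow> 'd),
    (('a \<Rightarrow> 'b) \<times> ('c \<Rightarrow> 'd)) \<times> (('a \<Rightarrow> 'b) \<times> ('c \<Rightarrow> 'd)) \<times> ('a \<Rightarrow> 'd)) cat" where
  "funcat C D =
    \<lparr> Obj = {F. is_functor C D F \<and> ext_functor C F},
      Arr = {(F, G, \<sigma>). is_functor C D F \<and> ext_functor C F \<and> is_functor C D G \<and> ext_functor C G
                        \<and> nat_trans C D F G \<sigma>},
      Dom = (\<lambda>(F, G, \<sigma>). F),
      Cod = (\<lambda>(F, G, \<sigma>). G),
      Ide = (\<lambda>F. (F, F, \<lambda>a. if a \<in> Obj C then Ide D (fst F a) else undefined)),
      Comp = (\<lambda>(G', H, \<tau>) (F, G, \<sigma>). (F, H, \<lambda>a. if a \<in> Obj C then Comp D (\<tau> a) (\<sigma> a) else undefined)) \<rparr>"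

definition iso_cat :: "('a,'c) cat \<Rightarrow> ('b,'d) cat \<Rightarrow> bool" where
  "iso_cat C D \<longleftrightarrow> (\<exists>F G. is_functor C D F \<and> is_functor D C G \<and>
     (\<forall>a\<in>Obj C. fst G (fst F a) = a) \<and> (\<forall>f\<in>Arr C. snd G (snd F f) = f) \<and>
     (\<forall>b\<in>Obj D. fst F (fst G b) = b) \<and> (\<forall>g\<in>Arr D. snd F (snd G g) = g))"

text \<open>An arrow (n, m, f) of \<Phi> is a function {0..<n} \<rightarrow> {0..<m}, stored extensionally.\<close>

type_synonym farr = "nat \<times> nat \<times> (nat \<Rightarrow> nat)"

definition Phi :: "(nat, farr) cat" where
  "Phi = \<lparr> Obj = UNIV,
           Arr = {(n, m, f). f \<in> {..<n} \<rightarrow>\<^sub>E {..<m}},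
           Dom = (\<lambda>(n, m, f). n),
           Cod = (\<lambda>(n, m, f). m),
           Ide = (\<lambda>n. (n, n, restrict id {..<n})),
           Comp = (\<lambda>(m', k, g) (n, m, f). (n, k, restrict (g \<circ> f) {..<n})) \<rparr>"

text \<open>An arrow (m, n, g) of \<Gamma>^op is a based map [m] = {0..m} \<rightarrow> [n] = {0..n} with g 0 = 0.\<close>

definition Gamma_op :: "(nat, farr) cat" where
  "Gamma_op = \<lparr> Obj = UNIV,
           Arr = {(m, n, g). g \<in> {..m} \<rightarrow>\<^sub>E {..n} \<and> g 0 = 0},
           Dom = (\<lambda>(m, n, g). m),
           Cod = (\<lambda>(m, n, g). n),
           Ide = (\<lambda>n. (n, n, restrict id {..n})),
           Comp = (\<lambda>(m', k, g) (n, m, f). (n, k, restrict (g \<circ> f) {..n})) \<rparr>"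

text \<open>Monoidal structure of \<Phi> (disjoint union, strictly associative and unital on objects).\<close>

definition phi_plus :: "farr \<Rightarrow> farr \<Rightarrow> farr" where
  "phi_plus = (\<lambda>(a, a', f) (b, b', g).
     (a + b, a' + b', \<lambda>i\<in>{..<a + b}. if i < a then f i else a' + g (i - a)))"

definition phi_swap :: "nat \<Rightarrow> nat \<Rightarrow> farr" where
  "phi_swap a b = (a + b, b + a, \<lambda>i\<in>{..<a + b}. if i < a then b + i else i - a)"

definition has_chosen_products ::
  "('o,'m) cat \<Rightarrow> 'o \<Rightarrow> ('o \<Rightarrow> 'o \<Rightarrow> 'o) \<Rightarrow> ('o \<Rightarrow> 'o \<Rightarrow> 'm) \<Rightarrow> ('o \<Rightarrow> 'o \<Rightarrow> 'm) \<Rightarrow> bool" where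
  "has_chosen_products M one P p1 p2 \<longleftrightarrow>
    one \<in> Obj M \<and> (\<forall>a\<in>Obj M. \<exists>!t. t \<in> hom M a one) \<and>
    (\<forall>a\<in>Obj M. \<forall>b\<in>Obj M. P a b \<in> Obj M \<and> p1 a b \<in> hom M (P a b) a \<and> p2 a b \<in> hom M (P a b) b \<and>
       (\<forall>c\<in>Obj M. \<forall>f\<in>hom M c a. \<forall>g\<in>hom M c b.
          \<exists>!h. h \<in> hom M c (P a b) \<and> Comp M (p1 a b) h = f \<and> Comp M (p2 a b) h = g))"

definition mpair ::
  "('o,'m) cat \<Rightarrow> ('o \<Rightarrow> 'o \<Rightarrow> 'o) \<Rightarrow> ('o \<Rightarrow> 'o \<Rightarrow> 'm) \<Rightarrow> ('o \<Rightarrow> 'o \<Rightarrow> 'm)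
     \<Rightarrow> 'o \<Rightarrow> 'o \<Rightarrow> 'o \<Rightarrow> 'm \<Rightarrow> 'm \<Rightarrow> 'm" where
  "mpair M P p1 p2 c a b f g =
     (THE h. h \<in> hom M c (P a b) \<and> Comp M (p1 a b) h = f \<and> Comp M (p2 a b) h = g)"

definition mtens ::
  "('o,'m) cat \<Rightarrow> ('o \<Rightarrow> 'o \<Rightarrow> 'o) \<Rightarrow> ('o \<Rightarrow> 'o \<Rightarrow> 'm) \<Rightarrow> ('o \<Rightarrow> 'o \<Rightarrow> 'm) \<Rightarrow> 'm \<Rightarrow> 'm \<Rightarrow> 'm" where
  "mtens M P p1 p2 f g =
     mpair M P p1 p2 (P (Dom M f) (Dom M g)) (Cod M f) (Cod M g)
       (Comp M f (p1 (Dom M f) (Dom M g))) (Comp M g (p2 (Dom M f) (Dom M g)))"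

definition massoc ::
  "('o,'m) cat \<Rightarrow> ('o \<Rightarrow> 'o \<Rightarrow> 'o) \<Rightarrow> ('o \<Rightarrow> 'o \<Rightarrow> 'm) \<Rightarrow> ('o \<Rightarrow> 'o \<Rightarrow> 'm) \<Rightarrow> 'o \<Rightarrow> 'o \<Rightarrow> 'o \<Rightarrow> 'm" where
  "massoc M P p1 p2 a b c =
     mpair M P p1 p2 (P (P a b) c) a (P b c)
       (Comp M (p1 a b) (p1 (P a b) c))
       (mpair M P p1 p2 (P (P a b) c) b c (Comp M (p2 a b) (p1 (P a b) c)) (p2 (P a b) c))"

definition msym ::
  "('o,'m) cat \<Rightarrow> ('o \<Rightarrow> 'o \<Rightarrow> 'o) \<Rightarrow> ('o \<Rightarrow> 'o \<Rightarrow> 'm) \<Rightarrow> ('o \<Rightarrow> 'o \<Rightarrow> 'm) \<Rightarrow> 'o \<Rightarrow> 'o \<Rightarrow> 'm" where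
  "msym M P p1 p2 a b = mpair M P p1 p2 (P a b) b a (p2 a b) (p1 a b)"

type_synonym ('o,'m) colax = "((nat \<Rightarrow> 'o) \<times> (farr \<Rightarrow> 'm)) \<times> (nat \<Rightarrow> nat \<Rightarrow> 'm) \<times> 'm"

definition scolax_obj ::
  "('o,'m) cat \<Rightarrow> 'o \<Rightarrow> ('o \<Rightarrow> 'o \<Rightarrow> 'o) \<Rightarrow> ('o \<Rightarrow> 'o \<Rightarrow> 'm) \<Rightarrow> ('o \<Rightarrow> 'o \<Rightarrow> 'm)
     \<Rightarrow> ('o,'m) colax \<Rightarrow> bool" where
  "scolax_obj M one P p1 p2 W \<longleftrightarrow>
    (case W of (X, \<xi>, \<xi>0) \<Rightarrow>
      is_functor Phi M X \<and> ext_functor Phi X \<and>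
      (\<forall>A B. \<xi> A B \<in> hom M (fst X (A + B)) (P (fst X A) (fst X B))) \<and>
      \<xi>0 \<in> hom M (fst X 0) one \<and>
      \<comment> \<open>naturality of \<xi>\<close>
      (\<forall>f\<in>Arr Phi. \<forall>g\<in>Arr Phi.
         Comp M (\<xi> (Cod Phi f) (Cod Phi g)) (snd X (phi_plus f g)) =
         Comp M (mtens M P p1 p2 (snd X f) (snd X g)) (\<xi> (Dom Phi f) (Dom Phi g))) \<and>
      \<comment> \<open>coassociativity\<close>
      (\<forall>A B C.
         Comp M (massoc M P p1 p2 (fst X A) (fst X B) (fst X C))
           (Comp M (mtens M P p1 p2 (\<xi> A B) (Ide M (fst X C))) (\<xi> (A + B) C)) =
         Comp M (mtens M P p1 p2 (Ide M (fst X A)) (\<xi> B C)) (\<xi> A (B + C))) \<and>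
      \<comment> \<open>counit (left and right)\<close>
      (\<forall>A. Comp M (p2 one (fst X A)) (Comp M (mtens M P p1 p2 \<xi>0 (Ide M (fst X A))) (\<xi> 0 A))
             = Ide M (fst X A) \<and>
           Comp M (p1 (fst X A) one) (Comp M (mtens M P p1 p2 (Ide M (fst X A)) \<xi>0) (\<xi> A 0))
             = Ide M (fst X A)) \<and>
      \<comment> \<open>compatibility with symmetries\<close>
      (\<forall>A B. Comp M (msym M P p1 p2 (fst X A) (fst X B)) (\<xi> A B) =
             Comp M (\<xi> B A) (snd X (phi_swap A B))))"

definition monoidal_trans ::
  "('o,'m) cat \<Rightarrow> ('o \<Rightarrow> 'o \<Rightarrow> 'o) \<Rightarrow> ('o \<Rightarrow> 'o \<Rightarrow> 'm) \<Rightarrow> ('o \<Rightarrow> 'o \<Rightarrow> 'm)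
     \<Rightarrow> ('o,'m) colax \<Rightarrow> ('o,'m) colax \<Rightarrow> (nat \<Rightarrow> 'm) \<Rightarrow> bool" where
  "monoidal_trans M P p1 p2 V Y \<sigma> \<longleftrightarrow>
    (case V of (W, \<omega>, \<omega>0) \<Rightarrow> case Y of (X, \<xi>, \<xi>0) \<Rightarrow>
      nat_trans Phi M W X \<sigma> \<and>
      (\<forall>A B. Comp M (\<xi> A B) (\<sigma> (A + B)) = Comp M (mtens M P p1 p2 (\<sigma> A) (\<sigma> B)) (\<omega> A B)) \<and>
      Comp M \<xi>0 (\<sigma> 0) = \<omega>0)"

definition scolax_cat ::
  "('o,'m) cat \<Rightarrow> 'o \<Rightarrow> ('o \<Rightarrow> 'o \<Rightarrow> 'o) \<Rightarrow> ('o \<Rightarrow> 'o \<Rightarrow> 'm) \<Rightarrow> ('o \<Rightarrow> 'o \<Rightarrow> 'm)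
     \<Rightarrow> (('o,'m) colax, ('o,'m) colax \<times> ('o,'m) colax \<times> (nat \<Rightarrow> 'm)) cat" where
  "scolax_cat M one P p1 p2 =
    \<lparr> Obj = {W. scolax_obj M one P p1 p2 W},
      Arr = {(W, X, \<sigma>). scolax_obj M one P p1 p2 W \<and> scolax_obj M one P p1 p2 X \<and>
                         monoidal_trans M P p1 p2 W X \<sigma>},
      Dom = (\<lambda>(W, X, \<sigma>). W),
      Cod = (\<lambda>(W, X, \<sigma>). X),
      Ide = (\<lambda>W. (W, W, \<lambda>n. Ide M (fst (fst W) n))),
      Comp = (\<lambda>(X', Y, \<tau>) (W, X, \<sigma>). (W, Y, \<lambda>n. Comp M (\<tau> n) (\<sigma> n))) \<rparr>"

end

theory Submission
  imports Defs
begin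

text \<open>A colax symmetric monoidal functor \<open>(X, \<xi>, \<xi>0)\<close> from \<open>(\<Phi>, +, 0)\<close> to a cartesian
  category is determined by \<open>X\<close> and the projections \<open>\<pi>\<^sub>1 = p\<^sub>1 \<circ> \<xi>\<^bsub>A,B\<^esub> : X(A + B) \<rightarrow> X A\<close>:
  \<open>\<xi>\<close> is the pairing of \<open>\<pi>\<^sub>1\<close> and \<open>\<pi>\<^sub>2\<close>, the symmetry axiom expresses \<open>\<pi>\<^sub>2\<close> through \<open>\<pi>\<^sub>1\<close>,
  and \<open>\<xi>0\<close> is forced by terminality. Counitality and coassociativity become
  \<open>\<pi>\<^sub>1 = id\<close> on \<open>X(A + 0)\<close> and \<open>\<pi>\<^sub>1 \<circ> \<pi>\<^sub>1 = \<pi>\<^sub>1\<close>, the relations satisfied by the collapse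
  maps \<open>[A + B] \<rightarrow> [A]\<close> of \<open>\<Gamma>\<^sup>o\<^sup>p\<close>. Since every based map \<open>[m] \<rightarrow> [n]\<close> is such a collapse
  \<open>[n + 1] \<rightarrow> [n]\<close> after the image \<open>g\<^sub>+\<close> of a map \<open>g : m \<rightarrow> n + 1\<close> of \<open>\<Phi>\<close>, \<open>X\<close> extends
  to a functor on \<open>\<Gamma>\<^sup>o\<^sup>p\<close> sending it to \<open>\<pi>\<^sub>1 \<circ> X g\<close>. Conversely a functor on \<open>\<Gamma>\<^sup>o\<^sup>p\<close>
  restricts along \<open>n \<mapsto> n\<^sub>+\<close> to a functor on \<open>\<Phi>\<close>, and its Segal maps
  \<open>Y[A + B] \<rightarrow> Y[A] \<times> Y[B]\<close> form a colax structure. The two constructions are mutually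
  inverse and do not change the components of transformations.\<close>

type_synonym ('o,'m) farr_functor = "(nat \<Rightarrow> 'o) \<times> (farr \<Rightarrow> 'm)"

section \<open>Cartesian categories\<close>

lemma in_hom_iff: "f \<in> hom C a b \<longleftrightarrow> f \<in> Arr C \<and> Dom C f = a \<and> Cod C f = b"
  by (simp add: hom_def)

locale cat_laws =
  fixes M :: "('o,'m) cat"
  assumes category: "category M"
begin

lemma in_hom_objs: "f \<in> hom M a b \<Longrightarrow> a \<in> Obj M \<and> b \<in> Obj M"
  using category unfolding category_def hom_def by auto

lemma ide_in_hom: "a \<in> Obj M \<Longrightarrow> Ide M a \<in> hom M a a"
  using category unfolding category_def by auto

lemma comp_in_hom: "f \<in> hom M a b \<Longrightarrow> g \<in> hom M b c \<Longrightarrow> Comp M g f \<in> hom M a c"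
  using category unfolding category_def hom_def by auto

lemma comp_assoc: "f \<in> hom M a b \<Longrightarrow> g \<in> hom M b c \<Longrightarrow> h \<in> hom M c d \<Longrightarrow>
   Comp M h (Comp M g f) = Comp M (Comp M h g) f"
  using category unfolding category_def hom_def by auto

lemma comp_ide_left: "f \<in> hom M a b \<Longrightarrow> Comp M (Ide M b) f = f"
  using category unfolding category_def hom_def by auto

lemma comp_ide_right: "f \<in> hom M a b \<Longrightarrow> Comp M f (Ide M a) = f"
  using category unfolding category_def hom_def by auto

end

locale cartesian_cat = cat_laws +
  fixes one :: 'o and P :: "'o \<Rightarrow> 'o \<Rightarrow> 'o" and p1 p2 :: "'o \<Rightarrow> 'o \<Rightarrow> 'm"
  assumes products: "has_chosen_products M one P p1 p2"
begin

lemma one_obj: "one \<in> Obj M"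
  using products unfolding has_chosen_products_def by auto

lemma terminal_unique: "t \<in> hom M a one \<Longrightarrow> t' \<in> hom M a one \<Longrightarrow> t = t'"
  using products in_hom_objs unfolding has_chosen_products_def by metis

lemma terminal_exists: "a \<in> Obj M \<Longrightarrow> \<exists>t. t \<in> hom M a one"
  using products unfolding has_chosen_products_def by metis

lemma the_terminal_in_hom: "a \<in> Obj M \<Longrightarrow> (THE t. t \<in> hom M a one) \<in> hom M a one"
  using theI'[of "\<lambda>t. t \<in> hom M a one"] terminal_exists terminal_unique by blast

lemma prod_obj: "a \<in> Obj M \<Longrightarrow> b \<in> Obj M \<Longrightarrow> P a b \<in> Obj M"
  and p1_in_hom: "a \<in> Obj M \<Longrightarrow> b \<in> Obj M \<Longrightarrow> p1 a b \<in> hom M (P a b) a"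
  and p2_in_hom: "a \<in> Obj M \<Longrightarrow> b \<in> Obj M \<Longrightarrow> p2 a b \<in> hom M (P a b) b"
  using products unfolding has_chosen_products_def by auto

lemma mpair_props:
  assumes "a \<in> Obj M" "b \<in> Obj M" "f \<in> hom M c a" "g \<in> hom M c b"
  shows "mpair M P p1 p2 c a b f g \<in> hom M c (P a b)"
    "Comp M (p1 a b) (mpair M P p1 p2 c a b f g) = f"
    "Comp M (p2 a b) (mpair M P p1 p2 c a b f g) = g"
proof -
  have "c \<in> Obj M" using assms in_hom_objs by blast
  then have "\<exists>!h. h \<in> hom M c (P a b) \<and> Comp M (p1 a b) h = f \<and> Comp M (p2 a b) h = g"
    using products assms unfolding has_chosen_products_def by blast
  from theI'[OF this] show "mpair M P p1 p2 c a b f g \<in> hom M c (P a b)"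
    "Comp M (p1 a b) (mpair M P p1 p2 c a b f g) = f"
    "Comp M (p2 a b) (mpair M P p1 p2 c a b f g) = g"
    unfolding mpair_def by auto
qed

lemma prod_arr_eqI:
  assumes "a \<in> Obj M" "b \<in> Obj M" "h \<in> hom M c (P a b)" "k \<in> hom M c (P a b)"
    "Comp M (p1 a b) h = Comp M (p1 a b) k" "Comp M (p2 a b) h = Comp M (p2 a b) k"
  shows "h = k"
proof -
  have "c \<in> Obj M" using assms in_hom_objs by blast
  moreover have "Comp M (p1 a b) h \<in> hom M c a" "Comp M (p2 a b) h \<in> hom M c b"
    using assms comp_in_hom p1_in_hom p2_in_hom by blast+
  ultimately have "\<exists>!x. x \<in> hom M c (P a b) \<and>
      Comp M (p1 a b) x = Comp M (p1 a b) h \<and> Comp M (p2 a b) x = Comp M (p2 a b) h"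
    using products assms unfolding has_chosen_products_def by blast
  then show ?thesis using assms by metis
qed

lemma mpair_eta:
  assumes "a \<in> Obj M" "b \<in> Obj M" "h \<in> hom M c (P a b)"
  shows "mpair M P p1 p2 c a b (Comp M (p1 a b) h) (Comp M (p2 a b) h) = h"
proof -
  have "Comp M (p1 a b) h \<in> hom M c a" "Comp M (p2 a b) h \<in> hom M c b"
    using comp_in_hom[OF assms(3)] p1_in_hom p2_in_hom assms by blast+
  note pair = mpair_props[OF assms(1,2) this]
  show ?thesis using prod_arr_eqI[OF assms(1,2) pair(1) assms(3)] pair(2,3) by simp
qed

lemma proj_comp_assoc:
  assumes "k \<in> hom M z c" "h \<in> hom M c (P a b)" "a \<in> Obj M" "b \<in> Obj M"
  shows "Comp M (p1 a b) (Comp M h k) = Comp M (Comp M (p1 a b) h) k"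
    "Comp M (p2 a b) (Comp M h k) = Comp M (Comp M (p2 a b) h) k"
  using comp_assoc[OF assms(1,2) p1_in_hom] comp_assoc[OF assms(1,2) p2_in_hom] assms(3,4)
  by simp_all

lemma mtens_props:
  assumes "f \<in> hom M a a'" "g \<in> hom M b b'"
  shows "mtens M P p1 p2 f g \<in> hom M (P a b) (P a' b')"
    "Comp M (p1 a' b') (mtens M P p1 p2 f g) = Comp M f (p1 a b)"
    "Comp M (p2 a' b') (mtens M P p1 p2 f g) = Comp M g (p2 a b)"
proof -
  have objs: "a \<in> Obj M" "a' \<in> Obj M" "b \<in> Obj M" "b' \<in> Obj M"
    using assms in_hom_objs by blast+
  have ends: "Dom M f = a" "Cod M f = a'" "Dom M g = b" "Cod M g = b'"
    using assms in_hom_iff by metis+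
  have "Comp M f (p1 a b) \<in> hom M (P a b) a'" "Comp M g (p2 a b) \<in> hom M (P a b) b'"
    using comp_in_hom p1_in_hom p2_in_hom objs assms by blast+
  from mpair_props[OF objs(2,4) this]
  show "mtens M P p1 p2 f g \<in> hom M (P a b) (P a' b')"
    "Comp M (p1 a' b') (mtens M P p1 p2 f g) = Comp M f (p1 a b)"
    "Comp M (p2 a' b') (mtens M P p1 p2 f g) = Comp M g (p2 a b)"
    unfolding mtens_def ends by auto
qed

lemma mtens_comp_props:
  assumes k: "k \<in> hom M z (P a b)" and f: "f \<in> hom M a a'" and g: "g \<in> hom M b b'"
  shows "Comp M (p1 a' b') (Comp M (mtens M P p1 p2 f g) k) = Comp M f (Comp M (p1 a b) k)"
    "Comp M (p2 a' b') (Comp M (mtens M P p1 p2 f g) k) = Comp M g (Comp M (p2 a b) k)"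
proof -
  have objs: "a \<in> Obj M" "b \<in> Obj M" "a' \<in> Obj M" "b' \<in> Obj M"
    using f g in_hom_objs by blast+
  note tens = mtens_props[OF f g]
  show "Comp M (p1 a' b') (Comp M (mtens M P p1 p2 f g) k) = Comp M f (Comp M (p1 a b) k)"
    using proj_comp_assoc(1)[OF k tens(1) objs(3,4)] tens(2)
      comp_assoc[OF k p1_in_hom[OF objs(1,2)] f] by simp
  show "Comp M (p2 a' b') (Comp M (mtens M P p1 p2 f g) k) = Comp M g (Comp M (p2 a b) k)"
    using proj_comp_assoc(2)[OF k tens(1) objs(3,4)] tens(3)
      comp_assoc[OF k p2_in_hom[OF objs(1,2)] g] by simp
qed

lemma massoc_props:
  assumes "a \<in> Obj M" "b \<in> Obj M" "c \<in> Obj M"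
  shows "massoc M P p1 p2 a b c \<in> hom M (P (P a b) c) (P a (P b c))"
    "Comp M (p1 a (P b c)) (massoc M P p1 p2 a b c) = Comp M (p1 a b) (p1 (P a b) c)"
    "Comp M (p1 b c) (Comp M (p2 a (P b c)) (massoc M P p1 p2 a b c)) =
       Comp M (p2 a b) (p1 (P a b) c)"
    "Comp M (p2 b c) (Comp M (p2 a (P b c)) (massoc M P p1 p2 a b c)) = p2 (P a b) c"
proof -
  have objs: "P a b \<in> Obj M" "P b c \<in> Obj M" using prod_obj assms by auto
  have "Comp M (p2 a b) (p1 (P a b) c) \<in> hom M (P (P a b) c) b"
    "p2 (P a b) c \<in> hom M (P (P a b) c) c"
    using comp_in_hom p1_in_hom p2_in_hom assms objs by blast+
  note inner = mpair_props[OF assms(2,3) this]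
  have "Comp M (p1 a b) (p1 (P a b) c) \<in> hom M (P (P a b) c) a"
    using comp_in_hom p1_in_hom assms objs by blast
  note outer = mpair_props[OF assms(1) objs(2) this inner(1)]
  show "massoc M P p1 p2 a b c \<in> hom M (P (P a b) c) (P a (P b c))"
    "Comp M (p1 a (P b c)) (massoc M P p1 p2 a b c) = Comp M (p1 a b) (p1 (P a b) c)"
    "Comp M (p1 b c) (Comp M (p2 a (P b c)) (massoc M P p1 p2 a b c)) =
       Comp M (p2 a b) (p1 (P a b) c)"
    "Comp M (p2 b c) (Comp M (p2 a (P b c)) (massoc M P p1 p2 a b c)) = p2 (P a b) c"
    unfolding massoc_def using outer inner by auto
qed

lemma massoc_comp_props:
  assumes k: "k \<in> hom M z (P (P a b) c)" and objs: "a \<in> Obj M" "b \<in> Obj M" "c \<in> Obj M"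
  shows "Comp M (p1 a (P b c)) (Comp M (massoc M P p1 p2 a b c) k) =
      Comp M (p1 a b) (Comp M (p1 (P a b) c) k)"
    "Comp M (p1 b c) (Comp M (p2 a (P b c)) (Comp M (massoc M P p1 p2 a b c) k)) =
      Comp M (p2 a b) (Comp M (p1 (P a b) c) k)"
    "Comp M (p2 b c) (Comp M (p2 a (P b c)) (Comp M (massoc M P p1 p2 a b c) k)) =
      Comp M (p2 (P a b) c) k"
proof -
  note assoc = massoc_props[OF objs]
  have prods: "P a b \<in> Obj M" "P b c \<in> Obj M" using prod_obj objs by auto
  have inner: "Comp M (p2 a (P b c)) (massoc M P p1 p2 a b c) \<in> hom M (P (P a b) c) (P b c)"
    using comp_in_hom[OF assoc(1) p2_in_hom] objs prods by auto
  have tail: "Comp M (p2 a (P b c)) (Comp M (massoc M P p1 p2 a b c) k) =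
      Comp M (Comp M (p2 a (P b c)) (massoc M P p1 p2 a b c)) k"
    using proj_comp_assoc(2)[OF k assoc(1) objs(1) prods(2)] .
  show "Comp M (p1 a (P b c)) (Comp M (massoc M P p1 p2 a b c) k) =
      Comp M (p1 a b) (Comp M (p1 (P a b) c) k)"
    using proj_comp_assoc(1)[OF k assoc(1) objs(1) prods(2)] assoc(2)
      comp_assoc[OF k p1_in_hom[OF prods(1) objs(3)] p1_in_hom[OF objs(1,2)]] by simp
  show "Comp M (p1 b c) (Comp M (p2 a (P b c)) (Comp M (massoc M P p1 p2 a b c) k)) =
      Comp M (p2 a b) (Comp M (p1 (P a b) c) k)"
    using tail proj_comp_assoc(1)[OF k inner objs(2,3)] assoc(3)
      comp_assoc[OF k p1_in_hom[OF prods(1) objs(3)] p2_in_hom[OF objs(1,2)]] by simp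
  show "Comp M (p2 b c) (Comp M (p2 a (P b c)) (Comp M (massoc M P p1 p2 a b c) k)) =
      Comp M (p2 (P a b) c) k"
    using tail proj_comp_assoc(2)[OF k inner objs(2,3)] assoc(4) by simp
qed

lemma msym_props:
  assumes "a \<in> Obj M" "b \<in> Obj M"
  shows "msym M P p1 p2 a b \<in> hom M (P a b) (P b a)"
    "Comp M (p1 b a) (msym M P p1 p2 a b) = p2 a b"
    "Comp M (p2 b a) (msym M P p1 p2 a b) = p1 a b"
  unfolding msym_def using mpair_props[OF assms(2,1) p2_in_hom[OF assms] p1_in_hom[OF assms]]
  by auto

lemma msym_comp_props:
  assumes k: "k \<in> hom M z (P a b)" and objs: "a \<in> Obj M" "b \<in> Obj M"
  shows "Comp M (p1 b a) (Comp M (msym M P p1 p2 a b) k) = Comp M (p2 a b) k"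
    "Comp M (p2 b a) (Comp M (msym M P p1 p2 a b) k) = Comp M (p1 a b) k"
  using msym_props[OF objs] proj_comp_assoc[OF k msym_props(1)[OF objs] objs(2,1)] by simp_all

end

section \<open>The categories \<open>\<Phi>\<close> and \<open>\<Gamma>\<^sup>o\<^sup>p\<close>\<close>

lemma Phi_simps [simp]:
  "Obj Phi = UNIV"
  "(n, m, f) \<in> Arr Phi \<longleftrightarrow> f \<in> {..<n} \<rightarrow>\<^sub>E {..<m}"
  "Dom Phi (n, m, f) = n" "Cod Phi (n, m, f) = m"
  "Ide Phi n = (n, n, restrict id {..<n})"
  "Comp Phi (m', k, g) (n, m, f) = (n, k, restrict (g \<circ> f) {..<n})"
  by (simp_all add: Phi_def)

lemma Gamma_op_simps [simp]:
  "Obj Gamma_op = UNIV"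
  "(n, m, f) \<in> Arr Gamma_op \<longleftrightarrow> f \<in> {..n} \<rightarrow>\<^sub>E {..m} \<and> f 0 = 0"
  "Dom Gamma_op (n, m, f) = n" "Cod Gamma_op (n, m, f) = m"
  "Ide Gamma_op n = (n, n, restrict id {..n})"
  "Comp Gamma_op (m', k, g) (n, m, f) = (n, k, restrict (g \<circ> f) {..n})"
  by (simp_all add: Gamma_op_def)

lemma Phi_arr_apply: "(n, m, f) \<in> Arr Phi \<Longrightarrow> i < n \<Longrightarrow> f i < m"
  by (metis Phi_simps(2) PiE_mem lessThan_iff)

lemma Gamma_op_arr_apply: "(n, m, f) \<in> Arr Gamma_op \<Longrightarrow> i \<le> n \<Longrightarrow> f i \<le> m"
  by (metis Gamma_op_simps(2) PiE_mem atMost_iff)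

lemma Gamma_op_arr_eqI:
  "(\<And>i. i \<le> n \<Longrightarrow> f i = g i) \<Longrightarrow> (n, k, restrict f {..n}) = (n, k, restrict g {..n})"
  by (simp add: fun_eq_iff restrict_def)

lemma Phi_arr_eqI:
  "(\<And>i. i < n \<Longrightarrow> f i = g i) \<Longrightarrow> (n, k, restrict f {..<n}) = (n, k, restrict g {..<n})"
  by (simp add: fun_eq_iff restrict_def)

lemma Ide_Phi_in_Arr: "Ide Phi n \<in> Arr Phi"
  by simp

lemma dom_cod_Phi_comp [simp]:
  "Dom Phi (Comp Phi g f) = Dom Phi f" "Cod Phi (Comp Phi g f) = Cod Phi g"
  by (cases f, cases g, simp)+

lemma phi_comp_in_Arr: "f \<in> Arr Phi \<Longrightarrow> g \<in> Arr Phi \<Longrightarrow> Cod Phi f = Dom Phi g \<Longrightarrow>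
    Comp Phi g f \<in> Arr Phi"
  by (cases f, cases g) (auto simp: PiE_def Pi_def)

lemma Gamma_op_comp_in_Arr: "(m, n, g) \<in> Arr Gamma_op \<Longrightarrow> (n, k, h) \<in> Arr Gamma_op \<Longrightarrow>
    Comp Gamma_op (n, k, h) (m, n, g) \<in> Arr Gamma_op"
  by (auto simp: PiE_def Pi_def)

lemma phi_plus_eq: "phi_plus (a, a', f) (b, b', g) =
     (a + b, a' + b', \<lambda>i\<in>{..<a + b}. if i < a then f i else a' + g (i - a))"
  by (simp add: phi_plus_def)

lemma phi_plus_in_Arr: "f \<in> Arr Phi \<Longrightarrow> g \<in> Arr Phi \<Longrightarrow> phi_plus f g \<in> Arr Phi"
  by (cases f, cases g) (auto simp: phi_plus_eq PiE_def Pi_def)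

lemma dom_cod_phi_plus [simp]:
  "Dom Phi (phi_plus f g) = Dom Phi f + Dom Phi g" "Cod Phi (phi_plus f g) = Cod Phi f + Cod Phi g"
  by (cases f, cases g, simp add: phi_plus_eq)+

lemma phi_swap_in_Arr: "phi_swap a b \<in> Arr Phi"
  by (auto simp: phi_swap_def PiE_def Pi_def)

definition phi_to_one :: "nat \<Rightarrow> farr" where
  "phi_to_one n = (n, 1, \<lambda>i\<in>{..<n}. 0)"

lemma phi_to_one_in_Arr: "phi_to_one n \<in> Arr Phi"
  by (simp add: phi_to_one_def)

lemma dom_cod_phi_to_one [simp]: "Dom Phi (phi_to_one n) = n" "Cod Phi (phi_to_one n) = 1"
  by (simp_all add: phi_to_one_def)

text \<open>The functor \<open>n \<mapsto> n\<^sub>+\<close> from \<open>\<Phi>\<close> to \<open>\<Gamma>\<^sup>o\<^sup>p\<close>: the point \<open>i\<close> of \<open>n\<close> becomes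
  \<open>i + 1\<close> in \<open>[n]\<close>.\<close>

definition add_base :: "farr \<Rightarrow> farr" where
  "add_base = (\<lambda>(n, m, f). (n, m, \<lambda>i\<in>{..n}. if i = 0 then 0 else Suc (f (i - 1))))"

text \<open>For a based map \<open>g : [m] \<rightarrow> [n]\<close>, \<open>base_to_last g : m \<rightarrow> n + 1\<close> sends the points
  that \<open>g\<close> maps to the base point to the extra point \<open>n\<close>; then \<open>g\<close> is the image of
  \<open>base_to_last g\<close> under \<open>add_base\<close> followed by the collapse of that point.\<close>

definition base_to_last :: "farr \<Rightarrow> farr" where
  "base_to_last = (\<lambda>(m, n, g). (m, Suc n, \<lambda>i\<in>{..<m}. if g (Suc i) = 0 then n else g (Suc i) - 1))"

definition gamma_proj1 :: "nat \<Rightarrow> nat \<Rightarrow> farr" where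
  "gamma_proj1 A B = (A + B, A, \<lambda>i\<in>{..A + B}. if i \<le> A then i else 0)"

definition gamma_proj2 :: "nat \<Rightarrow> nat \<Rightarrow> farr" where
  "gamma_proj2 A B = (A + B, B, \<lambda>i\<in>{..A + B}. if i \<le> A then 0 else i - A)"

lemma add_base_eq: "add_base (n, m, f) = (n, m, \<lambda>i\<in>{..n}. if i = 0 then 0 else Suc (f (i - 1)))"
  by (simp add: add_base_def)

lemma base_to_last_eq:
  "base_to_last (m, n, g) = (m, Suc n, \<lambda>i\<in>{..<m}. if g (Suc i) = 0 then n else g (Suc i) - 1)"
  by (simp add: base_to_last_def)

lemma add_base_in_Arr: "f \<in> Arr Phi \<Longrightarrow> add_base f \<in> Arr Gamma_op"
proof (cases f)
  case (fields n m f')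
  moreover assume "f \<in> Arr Phi"
  ultimately have "\<And>i. i \<le> n \<Longrightarrow> (if i = 0 then 0 else Suc (f' (i - 1))) \<le> m"
    using Phi_arr_apply[of n m f'] by (simp add: Suc_le_eq)
  then show ?thesis using fields by (simp add: add_base_eq PiE_def Pi_def)
qed

lemma base_to_last_in_Arr: "g \<in> Arr Gamma_op \<Longrightarrow> base_to_last g \<in> Arr Phi"
proof (cases g)
  case (fields m n g')
  moreover assume "g \<in> Arr Gamma_op"
  ultimately have "\<And>i. i < m \<Longrightarrow> g' (Suc i) \<le> n"
    by (metis Gamma_op_arr_apply Suc_leI)
  then have "\<And>i. i < m \<Longrightarrow> (if g' (Suc i) = 0 then n else g' (Suc i) - 1) < Suc n"
    by fastforce
  then show ?thesis using fields by (simp add: base_to_last_eq PiE_def Pi_def)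
qed

lemma gamma_proj_in_Arr: "gamma_proj1 A B \<in> Arr Gamma_op" "gamma_proj2 A B \<in> Arr Gamma_op"
  by (auto simp: gamma_proj1_def gamma_proj2_def PiE_def Pi_def)

lemma dom_cod_simps [simp]:
  "Dom Gamma_op (add_base f) = Dom Phi f" "Cod Gamma_op (add_base f) = Cod Phi f"
  "Dom Phi (base_to_last g) = Dom Gamma_op g" "Cod Phi (base_to_last g) = Suc (Cod Gamma_op g)"
  "Dom Gamma_op (gamma_proj1 A B) = A + B" "Cod Gamma_op (gamma_proj1 A B) = A"
  "Dom Gamma_op (gamma_proj2 A B) = A + B" "Cod Gamma_op (gamma_proj2 A B) = B"
  "Dom Phi (phi_swap A B) = A + B" "Cod Phi (phi_swap A B) = B + A"
  by (cases f; simp add: add_base_eq; fail | cases g; simp add: base_to_last_eq; fail |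
      simp add: gamma_proj1_def gamma_proj2_def phi_plus_eq phi_swap_def)+

lemma add_base_ide: "add_base (Ide Phi n) = Ide Gamma_op n"
  by (auto simp: add_base_eq fun_eq_iff)

lemma add_base_comp:
  assumes "f \<in> Arr Phi" "g \<in> Arr Phi" "Cod Phi f = Dom Phi g"
  shows "add_base (Comp Phi g f) = Comp Gamma_op (add_base g) (add_base f)"
proof -
  obtain n m f' k g' where fg: "f = (n, m, f')" "g = (m, k, g')"
    using assms(3) by (cases f, cases g) auto
  have "\<And>i. i \<le> n \<Longrightarrow> 0 < i \<Longrightarrow> f' (i - 1) < m" using Phi_arr_apply assms(1) fg by simp
  then show ?thesis unfolding fg add_base_eq Phi_simps Gamma_op_simps
    by (auto simp: fun_eq_iff Suc_le_eq)
qed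

lemma gamma_proj1_add_base_phi_plus:
  assumes "f \<in> Arr Phi" "g \<in> Arr Phi"
  shows "Comp Gamma_op (gamma_proj1 (Cod Phi f) (Cod Phi g)) (add_base (phi_plus f g)) =
    Comp Gamma_op (add_base f) (gamma_proj1 (Dom Phi f) (Dom Phi g))"
proof (cases f, cases g)
  fix A A' f' B B' g' assume fg: "f = (A, A', f')" "g = (B, B', g')"
  have "f' (i - 1) < A'" if "0 < i" "i \<le> A" for i
    using Phi_arr_apply[of A A' f'] assms(1) fg that by simp
  moreover have "f' (i - 1) < A' + B'" if "0 < i" "i \<le> A" for i
    using Phi_arr_apply[of A A' f'] assms(1) fg that by (simp add: trans_less_add1)
  moreover have "g' (i - Suc A) < B'" if "A < i" "i \<le> A + B" for i
    using Phi_arr_apply[of B B' g'] assms(2) fg that by simp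
  ultimately show ?thesis
    unfolding fg add_base_eq gamma_proj1_def phi_plus_eq Gamma_op_simps Phi_simps
    by (intro Gamma_op_arr_eqI) (auto simp: Suc_le_eq)
qed

lemma gamma_proj2_add_base_phi_plus:
  assumes "f \<in> Arr Phi" "g \<in> Arr Phi"
  shows "Comp Gamma_op (gamma_proj2 (Cod Phi f) (Cod Phi g)) (add_base (phi_plus f g)) =
    Comp Gamma_op (add_base g) (gamma_proj2 (Dom Phi f) (Dom Phi g))"
proof (cases f, cases g)
  fix A A' f' B B' g' assume fg: "f = (A, A', f')" "g = (B, B', g')"
  have "f' (i - 1) < A'" if "0 < i" "i \<le> A" for i
    using Phi_arr_apply[of A A' f'] assms(1) fg that by simp
  moreover have "f' (i - 1) < A' + B'" if "0 < i" "i \<le> A" for i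
    using Phi_arr_apply[of A A' f'] assms(1) fg that by (simp add: trans_less_add1)
  moreover have "g' (i - Suc A) < B'" if "A < i" "i \<le> A + B" for i
    using Phi_arr_apply[of B B' g'] assms(2) fg that by simp
  ultimately show ?thesis
    unfolding fg add_base_eq gamma_proj2_def phi_plus_eq Gamma_op_simps Phi_simps
    by (intro Gamma_op_arr_eqI) (auto simp: Suc_le_eq Suc_diff_Suc)
qed

lemma gamma_proj1_assoc:
  "Comp Gamma_op (gamma_proj1 A B) (gamma_proj1 (A + B) C) = gamma_proj1 A (B + C)"
  unfolding gamma_proj1_def Gamma_op_simps add.assoc[symmetric]
  by (rule Gamma_op_arr_eqI) auto

lemma gamma_proj2_gamma_proj1:
  "Comp Gamma_op (gamma_proj2 A B) (gamma_proj1 (A + B) C) =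
    Comp Gamma_op (gamma_proj1 B C) (gamma_proj2 A (B + C))"
  unfolding gamma_proj1_def gamma_proj2_def Gamma_op_simps add.assoc[symmetric]
  by (rule Gamma_op_arr_eqI) auto

lemma gamma_proj2_assoc:
  "gamma_proj2 (A + B) C = Comp Gamma_op (gamma_proj2 B C) (gamma_proj2 A (B + C))"
  unfolding gamma_proj2_def Gamma_op_simps add.assoc[symmetric]
  by (rule Gamma_op_arr_eqI) auto

lemma gamma_proj2_zero: "gamma_proj2 0 A = Ide Gamma_op A"
  by (simp add: gamma_proj2_def fun_eq_iff restrict_def)

lemma gamma_proj1_zero: "gamma_proj1 A 0 = Ide Gamma_op A"
  by (simp add: gamma_proj1_def fun_eq_iff restrict_def)

lemma gamma_proj1_add_base_swap:
  "Comp Gamma_op (gamma_proj1 B A) (add_base (phi_swap A B)) = gamma_proj2 A B"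
  unfolding gamma_proj1_def gamma_proj2_def phi_swap_def add_base_eq Gamma_op_simps
  by (rule Gamma_op_arr_eqI) auto

lemma gamma_proj2_add_base_swap:
  "Comp Gamma_op (gamma_proj2 B A) (add_base (phi_swap A B)) = gamma_proj1 A B"
  unfolding gamma_proj1_def gamma_proj2_def phi_swap_def add_base_eq Gamma_op_simps
  by (rule Gamma_op_arr_eqI) auto

lemma base_to_last_add_base:
  assumes "f \<in> Arr Phi"
  shows "base_to_last (add_base f) = phi_plus f (phi_to_one 0)"
proof (cases f)
  case (fields n m f')
  then have "f' \<in> extensional {..<n}" using assms by (simp add: PiE_def)
  then show ?thesis unfolding fields add_base_eq base_to_last_eq phi_plus_eq phi_to_one_def
    by (auto simp: fun_eq_iff extensional_def)
qed

lemma base_to_last_gamma_proj1: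
  "base_to_last (gamma_proj1 A B) = phi_plus (Ide Phi A) (phi_to_one B)"
  unfolding gamma_proj1_def base_to_last_eq Phi_simps phi_plus_eq phi_to_one_def
  by (auto simp: fun_eq_iff)

lemma base_to_last_gamma_proj2:
  "base_to_last (gamma_proj2 A B) = Comp Phi (phi_plus (Ide Phi B) (phi_to_one A)) (phi_swap A B)"
  unfolding gamma_proj2_def base_to_last_eq Phi_simps phi_plus_eq phi_swap_def phi_to_one_def
  by (auto simp: fun_eq_iff)

lemma base_to_last_ide: "base_to_last (Ide Gamma_op n) = phi_plus (Ide Phi n) (phi_to_one 0)"
  by (auto simp: base_to_last_eq phi_plus_eq phi_to_one_def fun_eq_iff)

lemma gamma_proj1_add_base_base_to_last:
  assumes "g \<in> Arr Gamma_op"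
  shows "Comp Gamma_op (gamma_proj1 (Cod Gamma_op g) 1) (add_base (base_to_last g)) = g"
proof (cases g)
  case (fields m n g')
  have g': "(m, n, g') \<in> Arr Gamma_op" using assms fields by simp
  have "restrict g' {..m} = g'" using g' PiE_restrict by auto
  moreover have "g' i \<le> n" if "i \<le> m" for i using Gamma_op_arr_apply[OF g' that] .
  moreover have "g' 0 = 0" using g' by simp
  ultimately have "Comp Gamma_op (gamma_proj1 n 1) (add_base (base_to_last (m, n, g'))) =
      (m, n, restrict g' {..m})"
    unfolding gamma_proj1_def base_to_last_eq add_base_eq Gamma_op_simps
    by (intro Gamma_op_arr_eqI) auto
  then show ?thesis using fields \<open>restrict g' {..m} = g'\<close> by simp
qed

lemma base_to_last_comp:
  assumes g: "(m, n, g) \<in> Arr Gamma_op" and h: "(n, k, h) \<in> Arr Gamma_op"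
  shows "base_to_last (Comp Gamma_op (n, k, h) (m, n, g)) =
    Comp Phi (phi_plus (Ide Phi k) (phi_to_one 2))
      (Comp Phi (phi_plus (base_to_last (n, k, h)) (Ide Phi 1)) (base_to_last (m, n, g)))"
  unfolding base_to_last_eq Gamma_op_simps Phi_simps phi_plus_eq phi_to_one_def Suc_eq_plus1
proof (rule Phi_arr_eqI, goal_cases)
  case (1 i)
  have "g (Suc i) \<le> n" using Gamma_op_arr_apply[OF g] 1 by simp
  moreover have "h (g (Suc i)) \<le> k" using Gamma_op_arr_apply[OF g] Gamma_op_arr_apply[OF h] 1 by simp
  moreover have "h 0 = 0" using h by simp
  ultimately show ?case using 1 by (cases "g (Suc i)") auto
qed

section \<open>From colax functors to functors on \<open>\<Gamma>\<^sup>o\<^sup>p\<close>\<close>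

definition colax_proj ::
  "('o,'m) cat \<Rightarrow> ('o \<Rightarrow> 'o \<Rightarrow> 'm) \<Rightarrow> ('o,'m) farr_functor \<Rightarrow> (nat \<Rightarrow> nat \<Rightarrow> 'm)
     \<Rightarrow> nat \<Rightarrow> nat \<Rightarrow> 'm" where
  "colax_proj M p X \<xi> A B = Comp M (p (fst X A) (fst X B)) (\<xi> A B)"

definition gamma_of_colax ::
  "('o,'m) cat \<Rightarrow> ('o \<Rightarrow> 'o \<Rightarrow> 'm) \<Rightarrow> ('o,'m) colax \<Rightarrow> ('o,'m) farr_functor" where
  "gamma_of_colax M p1 W = (case W of (X, \<xi>, \<xi>0) \<Rightarrow>
     (fst X, \<lambda>g. if g \<in> Arr Gamma_op
       then Comp M (colax_proj M p1 X \<xi> (Cod Gamma_op g) 1) (snd X (base_to_last g))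
       else undefined))"

lemma fst_gamma_of_colax [simp]: "fst (gamma_of_colax M p1 W) = fst (fst W)"
  by (cases W) (simp add: gamma_of_colax_def)

locale colax_functor = cartesian_cat +
  fixes X :: "('o,'m) farr_functor" and \<xi> :: "nat \<Rightarrow> nat \<Rightarrow> 'm" and \<xi>0 :: 'm
  assumes colax: "scolax_obj M one P p1 p2 (X, \<xi>, \<xi>0)"
begin

abbreviation "pi1 \<equiv> colax_proj M p1 X \<xi>"
abbreviation "pi2 \<equiv> colax_proj M p2 X \<xi>"
abbreviation "Y \<equiv> gamma_of_colax M p1 (X, \<xi>, \<xi>0)"

lemma X_functor: "is_functor Phi M X" and X_ext: "ext_functor Phi X"
  and xi_in_hom: "\<xi> A B \<in> hom M (fst X (A + B)) (P (fst X A) (fst X B))"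
  and xi0_in_hom: "\<xi>0 \<in> hom M (fst X 0) one"
  and xi_natural: "\<And>f g. f \<in> Arr Phi \<Longrightarrow> g \<in> Arr Phi \<Longrightarrow>
         Comp M (\<xi> (Cod Phi f) (Cod Phi g)) (snd X (phi_plus f g)) =
         Comp M (mtens M P p1 p2 (snd X f) (snd X g)) (\<xi> (Dom Phi f) (Dom Phi g))"
  and xi_coassoc: "Comp M (massoc M P p1 p2 (fst X A) (fst X B) (fst X C))
           (Comp M (mtens M P p1 p2 (\<xi> A B) (Ide M (fst X C))) (\<xi> (A + B) C)) =
         Comp M (mtens M P p1 p2 (Ide M (fst X A)) (\<xi> B C)) (\<xi> A (B + C))"
  and xi_counit_left: "Comp M (p2 one (fst X A))
           (Comp M (mtens M P p1 p2 \<xi>0 (Ide M (fst X A))) (\<xi> 0 A)) = Ide M (fst X A)"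
  and xi_counit_right: "Comp M (p1 (fst X A) one)
           (Comp M (mtens M P p1 p2 (Ide M (fst X A)) \<xi>0) (\<xi> A 0)) = Ide M (fst X A)"
  and xi_sym: "Comp M (msym M P p1 p2 (fst X A) (fst X B)) (\<xi> A B) =
         Comp M (\<xi> B A) (snd X (phi_swap A B))"
  using colax unfolding scolax_obj_def by auto

lemma X_obj: "fst X n \<in> Obj M"
  using X_functor unfolding is_functor_def by auto

lemma X_in_hom: "f \<in> Arr Phi \<Longrightarrow> snd X f \<in> hom M (fst X (Dom Phi f)) (fst X (Cod Phi f))"
  using X_functor unfolding is_functor_def by blast

lemma X_comp: "f \<in> Arr Phi \<Longrightarrow> g \<in> Arr Phi \<Longrightarrow> Cod Phi f = Dom Phi g \<Longrightarrow>
    snd X (Comp Phi g f) = Comp M (snd X g) (snd X f)"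
  using X_functor unfolding is_functor_def by blast

lemma X_ide: "snd X (Ide Phi n) = Ide M (fst X n)"
  using X_functor unfolding is_functor_def by simp

lemma pi1_in_hom: "pi1 A B \<in> hom M (fst X (A + B)) (fst X A)"
  unfolding colax_proj_def using comp_in_hom[OF xi_in_hom p1_in_hom[OF X_obj X_obj]] .

lemma pi1_natural:
  assumes f: "f \<in> Arr Phi" and g: "g \<in> Arr Phi"
  shows "Comp M (pi1 (Cod Phi f) (Cod Phi g)) (snd X (phi_plus f g)) =
    Comp M (snd X f) (pi1 (Dom Phi f) (Dom Phi g))"
proof -
  let ?A = "Dom Phi f" and ?A' = "Cod Phi f" and ?B = "Dom Phi g" and ?B' = "Cod Phi g"
  have fg: "snd X (phi_plus f g) \<in> hom M (fst X (?A + ?B)) (fst X (?A' + ?B'))"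
    using X_in_hom[OF phi_plus_in_Arr[OF f g]] by simp
  note tens = mtens_props[OF X_in_hom[OF f] X_in_hom[OF g]]
  have "Comp M (pi1 ?A' ?B') (snd X (phi_plus f g)) =
      Comp M (p1 (fst X ?A') (fst X ?B')) (Comp M (\<xi> ?A' ?B') (snd X (phi_plus f g)))"
    unfolding colax_proj_def using comp_assoc[OF fg xi_in_hom p1_in_hom[OF X_obj X_obj]] by simp
  also have "\<dots> = Comp M (p1 (fst X ?A') (fst X ?B'))
      (Comp M (mtens M P p1 p2 (snd X f) (snd X g)) (\<xi> ?A ?B))"
    using xi_natural[OF f g] by simp
  also have "\<dots> = Comp M (snd X f) (pi1 ?A ?B)"
    unfolding colax_proj_def using mtens_comp_props(1)[OF xi_in_hom X_in_hom[OF f] X_in_hom[OF g]] .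
  finally show ?thesis .
qed

lemma pi1_zero: "pi1 A 0 = Ide M (fst X A)"
proof -
  note tens = mtens_props[OF ide_in_hom[OF X_obj] xi0_in_hom]
  have "Ide M (fst X A) =
      Comp M (Comp M (p1 (fst X A) one) (mtens M P p1 p2 (Ide M (fst X A)) \<xi>0)) (\<xi> A 0)"
    using xi_counit_right comp_assoc[OF xi_in_hom tens(1) p1_in_hom[OF X_obj one_obj]] by simp
  also have "\<dots> = pi1 A 0"
    using tens(2) comp_ide_left[OF p1_in_hom[OF X_obj X_obj]] unfolding colax_proj_def by simp
  finally show ?thesis by simp
qed

lemma pi1_pi1: "Comp M (pi1 A B) (pi1 (A + B) C) = pi1 A (B + C)"
proof -
  let ?a = "fst X A" and ?b = "fst X B" and ?c = "fst X C"
  note T = mtens_props[OF xi_in_hom[of A B] ide_in_hom[OF X_obj[of C]]]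
  note S = mtens_props[OF ide_in_hom[OF X_obj[of A]] xi_in_hom[of B C]]
  note As = massoc_props[OF X_obj X_obj X_obj, of A B C]
  have "pi1 A (B + C) = Comp M (p1 ?a (P ?b ?c))
      (Comp M (mtens M P p1 p2 (Ide M ?a) (\<xi> B C)) (\<xi> A (B + C)))"
    using mtens_comp_props(1)[OF xi_in_hom ide_in_hom[OF X_obj] xi_in_hom[of B C]]
      comp_ide_left[OF comp_in_hom[OF xi_in_hom p1_in_hom[OF X_obj X_obj]]]
    unfolding colax_proj_def by (simp add: add.assoc)
  also have "\<dots> = Comp M (p1 ?a (P ?b ?c)) (Comp M (massoc M P p1 p2 ?a ?b ?c)
      (Comp M (mtens M P p1 p2 (\<xi> A B) (Ide M ?c)) (\<xi> (A + B) C)))"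
    using xi_coassoc by simp
  also have "\<dots> = Comp M (p1 ?a ?b) (Comp M (p1 (P ?a ?b) ?c)
      (Comp M (mtens M P p1 p2 (\<xi> A B) (Ide M ?c)) (\<xi> (A + B) C)))"
    using massoc_comp_props(1)[OF comp_in_hom[OF xi_in_hom T(1)] X_obj X_obj X_obj] .
  also have "\<dots> = Comp M (p1 ?a ?b) (Comp M (\<xi> A B) (pi1 (A + B) C))"
    using mtens_comp_props(1)[OF xi_in_hom xi_in_hom[of A B] ide_in_hom[OF X_obj[of C]]]
    unfolding colax_proj_def by simp
  also have "\<dots> = Comp M (pi1 A B) (pi1 (A + B) C)"
    using comp_assoc[OF pi1_in_hom xi_in_hom p1_in_hom[OF X_obj X_obj]]
    unfolding colax_proj_def by simp
  finally show ?thesis by simp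
qed

lemma pi2_eq_pi1_swap: "pi2 A B = Comp M (pi1 B A) (snd X (phi_swap A B))"
proof -
  have swap: "snd X (phi_swap A B) \<in> hom M (fst X (A + B)) (fst X (B + A))"
    using X_in_hom[OF phi_swap_in_Arr] by simp
  have "pi2 A B = Comp M (p1 (fst X B) (fst X A))
      (Comp M (msym M P p1 p2 (fst X A) (fst X B)) (\<xi> A B))"
    using msym_comp_props(1)[OF xi_in_hom X_obj X_obj] unfolding colax_proj_def by simp
  also have "\<dots> = Comp M (pi1 B A) (snd X (phi_swap A B))"
    using xi_sym proj_comp_assoc(1)[OF swap xi_in_hom X_obj X_obj]
    unfolding colax_proj_def by simp
  finally show ?thesis .
qed

lemma Y_arr: "g \<in> Arr Gamma_op \<Longrightarrow>
    snd Y g = Comp M (pi1 (Cod Gamma_op g) 1) (snd X (base_to_last g))"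
  by (simp add: gamma_of_colax_def)

lemma X_base_to_last_in_hom: "g \<in> Arr Gamma_op \<Longrightarrow>
    snd X (base_to_last g) \<in> hom M (fst X (Dom Gamma_op g)) (fst X (Cod Gamma_op g + 1))"
  using X_in_hom[OF base_to_last_in_Arr] by simp

lemma Y_in_hom: "g \<in> Arr Gamma_op \<Longrightarrow>
    snd Y g \<in> hom M (fst X (Dom Gamma_op g)) (fst X (Cod Gamma_op g))"
  using Y_arr comp_in_hom[OF X_base_to_last_in_hom pi1_in_hom] by simp

lemma Y_ide: "snd Y (Ide Gamma_op n) = Ide M (fst X n)"
proof -
  have "Ide Gamma_op n \<in> Arr Gamma_op" "Cod Gamma_op (Ide Gamma_op n) = n" by simp_all
  then have "snd Y (Ide Gamma_op n) = Comp M (pi1 n 1) (snd X (phi_plus (Ide Phi n) (phi_to_one 0)))"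
    using Y_arr base_to_last_ide[of n] by (simp del: Gamma_op_simps Phi_simps)
  also have "\<dots> = Comp M (snd X (Ide Phi n)) (pi1 n 0)"
    using pi1_natural[OF Ide_Phi_in_Arr phi_to_one_in_Arr, of n 0] by simp
  also have "\<dots> = Ide M (fst X n)"
    using X_ide pi1_zero comp_ide_left[OF ide_in_hom[OF X_obj]] by simp
  finally show ?thesis .
qed

text \<open>Both sides forget the last two points of \<open>k + 2\<close>.\<close>

lemma pi1_collapse:
  "Comp M (pi1 k 1) (snd X (phi_plus (Ide Phi k) (phi_to_one 2))) =
    Comp M (pi1 k 1) (pi1 (Suc k) 1)"
  using pi1_natural[OF Ide_Phi_in_Arr phi_to_one_in_Arr, of k 2] X_ide comp_ide_left[OF pi1_in_hom]
    pi1_pi1[of k 1 1] by (simp add: numeral_2_eq_2)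

lemma X_base_to_last_comp:
  assumes g: "(m, n, g) \<in> Arr Gamma_op" and h: "(n, k, h) \<in> Arr Gamma_op"
  shows "snd X (base_to_last (Comp Gamma_op (n, k, h) (m, n, g))) =
    Comp M (snd X (phi_plus (Ide Phi k) (phi_to_one 2)))
      (Comp M (snd X (phi_plus (base_to_last (n, k, h)) (Ide Phi 1))) (snd X (base_to_last (m, n, g))))"
proof -
  let ?bg = "base_to_last (m, n, g)" and ?bh = "base_to_last (n, k, h)"
  let ?p = "phi_plus ?bh (Ide Phi 1)" and ?q = "phi_plus (Ide Phi k) (phi_to_one 2)"
  have arrs: "?bg \<in> Arr Phi" "?p \<in> Arr Phi" "?q \<in> Arr Phi"
    using base_to_last_in_Arr[OF g] base_to_last_in_Arr[OF h] phi_to_one_in_Arr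
    by (auto intro!: phi_plus_in_Arr)
  have composable: "Cod Phi ?bg = Dom Phi ?p" "Cod Phi (Comp Phi ?p ?bg) = Dom Phi ?q"
    by (simp_all add: base_to_last_eq)
  show ?thesis
    using base_to_last_comp[OF g h] X_comp[OF arrs(1,2) composable(1)]
      X_comp[OF phi_comp_in_Arr[OF arrs(1,2) composable(1)] arrs(3) composable(2)]
    by (simp del: Phi_simps Gamma_op_simps)
qed

lemma Y_comp:
  assumes g: "(m, n, g) \<in> Arr Gamma_op" and h: "(n, k, h) \<in> Arr Gamma_op"
  shows "snd Y (Comp Gamma_op (n, k, h) (m, n, g)) = Comp M (snd Y (n, k, h)) (snd Y (m, n, g))"
proof -
  let ?bg = "base_to_last (m, n, g)" and ?bh = "base_to_last (n, k, h)"
  let ?p = "phi_plus ?bh (Ide Phi 1)" and ?q = "phi_plus (Ide Phi k) (phi_to_one 2)"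
  have arrs: "?bh \<in> Arr Phi" "?p \<in> Arr Phi"
    using base_to_last_in_Arr[OF h] by (auto intro!: phi_plus_in_Arr)
  have homs: "snd X ?bg \<in> hom M (fst X m) (fst X (Suc n))"
    "snd X ?bh \<in> hom M (fst X n) (fst X (Suc k))"
    "snd X ?p \<in> hom M (fst X (Suc n)) (fst X (Suc (Suc k)))"
    "snd X ?q \<in> hom M (fst X (Suc (Suc k))) (fst X (Suc k))"
    "pi1 n 1 \<in> hom M (fst X (Suc n)) (fst X n)"
    "pi1 k 1 \<in> hom M (fst X (Suc k)) (fst X k)"
    "pi1 (Suc k) 1 \<in> hom M (fst X (Suc (Suc k))) (fst X (Suc k))"
    using X_base_to_last_in_hom[OF g] X_base_to_last_in_hom[OF h] X_in_hom[OF arrs(2)]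
      X_in_hom[OF phi_plus_in_Arr[OF Ide_Phi_in_Arr phi_to_one_in_Arr, of k 2]]
      pi1_in_hom[of n 1] pi1_in_hom[of k 1] pi1_in_hom[of "Suc k" 1]
    by (simp_all add: base_to_last_eq numeral_2_eq_2)
  have "snd Y (Comp Gamma_op (n, k, h) (m, n, g)) =
      Comp M (pi1 k 1) (Comp M (snd X ?q) (Comp M (snd X ?p) (snd X ?bg)))"
    using Y_arr[OF Gamma_op_comp_in_Arr[OF g h]] X_base_to_last_comp[OF g h]
    by (simp del: Phi_simps)
  also have "\<dots> = Comp M (pi1 k 1) (Comp M (pi1 (Suc k) 1) (Comp M (snd X ?p) (snd X ?bg)))"
    using comp_assoc[OF comp_in_hom[OF homs(1,3)] homs(4,6)] pi1_collapse
      comp_assoc[OF comp_in_hom[OF homs(1,3)] homs(7,6)] by simp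
  also have "\<dots> = Comp M (pi1 k 1) (Comp M (snd X ?bh) (Comp M (pi1 n 1) (snd X ?bg)))"
    using comp_assoc[OF homs(1,3,7)] comp_assoc[OF homs(1,5,2)]
      pi1_natural[OF arrs(1) Ide_Phi_in_Arr] by (simp add: base_to_last_eq)
  also have "\<dots> = Comp M (snd Y (n, k, h)) (snd Y (m, n, g))"
    using Y_arr[OF g] Y_arr[OF h] comp_assoc[OF comp_in_hom[OF homs(1,5)] homs(2,6)] by simp
  finally show ?thesis .
qed

lemma Y_functor: "is_functor Gamma_op M Y"
  unfolding is_functor_def
proof (intro conjI ballI impI)
  fix f assume "f \<in> Arr Gamma_op"
  then show "snd Y f \<in> hom M (fst Y (Dom Gamma_op f)) (fst Y (Cod Gamma_op f))"
    using Y_in_hom by simp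
next
  fix f g assume "f \<in> Arr Gamma_op" "g \<in> Arr Gamma_op" "Cod Gamma_op f = Dom Gamma_op g"
  then show "snd Y (Comp Gamma_op g f) = Comp M (snd Y g) (snd Y f)"
    using Y_comp by (cases f, cases g) auto
qed (use X_obj Y_ide in simp_all)

lemma Y_ext: "ext_functor Gamma_op Y"
  unfolding ext_functor_def by (simp add: gamma_of_colax_def)

end

section \<open>From functors on \<open>\<Gamma>\<^sup>o\<^sup>p\<close> to colax functors\<close>

definition precomp_add_base :: "('o,'m) farr_functor \<Rightarrow> ('o,'m) farr_functor" where
  "precomp_add_base Y = (fst Y, \<lambda>f. if f \<in> Arr Phi then snd Y (add_base f) else undefined)"

definition segal_map ::
  "('o,'m) cat \<Rightarrow> ('o \<Rightarrow> 'o \<Rightarrow> 'o) \<Rightarrow> ('o \<Rightarrow> 'o \<Rightarrow> 'm) \<Rightarrow> ('o \<Rightarrow> 'o \<Rightarrow> 'm)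
     \<Rightarrow> ('o,'m) farr_functor \<Rightarrow> nat \<Rightarrow> nat \<Rightarrow> 'm" where
  "segal_map M P p1 p2 Y A B = mpair M P p1 p2 (fst Y (A + B)) (fst Y A) (fst Y B)
     (snd Y (gamma_proj1 A B)) (snd Y (gamma_proj2 A B))"

definition terminal_map :: "('o,'m) cat \<Rightarrow> 'o \<Rightarrow> ('o,'m) farr_functor \<Rightarrow> 'm" where
  "terminal_map M one Y = (THE t. t \<in> hom M (fst Y 0) one)"

definition colax_of_gamma ::
  "('o,'m) cat \<Rightarrow> 'o \<Rightarrow> ('o \<Rightarrow> 'o \<Rightarrow> 'o) \<Rightarrow> ('o \<Rightarrow> 'o \<Rightarrow> 'm) \<Rightarrow> ('o \<Rightarrow> 'o \<Rightarrow> 'm)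
     \<Rightarrow> ('o,'m) farr_functor \<Rightarrow> ('o,'m) colax" where
  "colax_of_gamma M one P p1 p2 Y =
     (precomp_add_base Y, segal_map M P p1 p2 Y, terminal_map M one Y)"

lemma fst_precomp_add_base [simp]: "fst (precomp_add_base Y) = fst Y"
  by (simp add: precomp_add_base_def)

locale gamma_object = cartesian_cat +
  fixes Y :: "('o,'m) farr_functor"
  assumes Y_functor: "is_functor Gamma_op M Y" and Y_ext: "ext_functor Gamma_op Y"
begin

abbreviation "X \<equiv> precomp_add_base Y"
abbreviation "\<xi> \<equiv> segal_map M P p1 p2 Y"
abbreviation "\<xi>0 \<equiv> terminal_map M one Y"

lemma Y_obj: "fst Y n \<in> Obj M"
  using Y_functor unfolding is_functor_def by auto

lemma Y_in_hom: "g \<in> Arr Gamma_op \<Longrightarrow>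
    snd Y g \<in> hom M (fst Y (Dom Gamma_op g)) (fst Y (Cod Gamma_op g))"
  using Y_functor unfolding is_functor_def by blast

lemma Y_comp: "f \<in> Arr Gamma_op \<Longrightarrow> g \<in> Arr Gamma_op \<Longrightarrow> Cod Gamma_op f = Dom Gamma_op g \<Longrightarrow>
    snd Y (Comp Gamma_op g f) = Comp M (snd Y g) (snd Y f)"
  using Y_functor unfolding is_functor_def by blast

lemma Y_ide: "snd Y (Ide Gamma_op n) = Ide M (fst Y n)"
  using Y_functor unfolding is_functor_def by simp

lemma Y_gamma_proj_in_hom:
  "snd Y (gamma_proj1 A B) \<in> hom M (fst Y (A + B)) (fst Y A)"
  "snd Y (gamma_proj2 A B) \<in> hom M (fst Y (A + B)) (fst Y B)"
  using Y_in_hom[OF gamma_proj_in_Arr(1)] Y_in_hom[OF gamma_proj_in_Arr(2)] by simp_all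

lemma xi_props:
  "\<xi> A B \<in> hom M (fst Y (A + B)) (P (fst Y A) (fst Y B))"
  "Comp M (p1 (fst Y A) (fst Y B)) (\<xi> A B) = snd Y (gamma_proj1 A B)"
  "Comp M (p2 (fst Y A) (fst Y B)) (\<xi> A B) = snd Y (gamma_proj2 A B)"
  unfolding segal_map_def using mpair_props[OF Y_obj Y_obj Y_gamma_proj_in_hom] by auto

lemma xi_comp_props:
  assumes "k \<in> hom M z (fst Y (A + B))"
  shows "Comp M (p1 (fst Y A) (fst Y B)) (Comp M (\<xi> A B) k) = Comp M (snd Y (gamma_proj1 A B)) k"
    "Comp M (p2 (fst Y A) (fst Y B)) (Comp M (\<xi> A B) k) = Comp M (snd Y (gamma_proj2 A B)) k"
  using proj_comp_assoc[OF assms xi_props(1) Y_obj Y_obj] xi_props(2,3) by simp_all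

lemma xi0_in_hom: "\<xi>0 \<in> hom M (fst Y 0) one"
  unfolding terminal_map_def using the_terminal_in_hom[OF Y_obj] .

lemma X_arr: "f \<in> Arr Phi \<Longrightarrow> snd X f = snd Y (add_base f)"
  by (simp add: precomp_add_base_def)

lemma X_in_hom: "f \<in> Arr Phi \<Longrightarrow> snd X f \<in> hom M (fst Y (Dom Phi f)) (fst Y (Cod Phi f))"
  using X_arr Y_in_hom[OF add_base_in_Arr] by simp

lemma X_functor: "is_functor Phi M X"
  unfolding is_functor_def
proof (intro conjI ballI impI)
  fix f g assume "f \<in> Arr Phi" "g \<in> Arr Phi" "Cod Phi f = Dom Phi g"
  then show "snd X (Comp Phi g f) = Comp M (snd X g) (snd X f)"
    using X_arr phi_comp_in_Arr add_base_comp Y_comp[OF add_base_in_Arr add_base_in_Arr] by simp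
qed (use Y_obj X_in_hom X_arr add_base_ide Y_ide Ide_Phi_in_Arr in \<open>simp_all del: Phi_simps\<close>)

lemma X_ext: "ext_functor Phi X"
  unfolding ext_functor_def by (simp add: precomp_add_base_def)

lemma xi_natural:
  assumes f: "f \<in> Arr Phi" and g: "g \<in> Arr Phi"
  shows "Comp M (\<xi> (Cod Phi f) (Cod Phi g)) (snd X (phi_plus f g)) =
    Comp M (mtens M P p1 p2 (snd X f) (snd X g)) (\<xi> (Dom Phi f) (Dom Phi g))"
    (is "?lhs = ?rhs")
proof -
  let ?A = "Dom Phi f" and ?A' = "Cod Phi f" and ?B = "Dom Phi g" and ?B' = "Cod Phi g"
  have fg: "phi_plus f g \<in> Arr Phi" using phi_plus_in_Arr[OF f g] .
  have Xfg: "snd X (phi_plus f g) \<in> hom M (fst Y (?A + ?B)) (fst Y (?A' + ?B'))"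
    using X_in_hom[OF fg] by simp
  note tens = mtens_props[OF X_in_hom[OF f] X_in_hom[OF g]]
  note tens_comp = mtens_comp_props[OF xi_props(1) X_in_hom[OF f] X_in_hom[OF g]]
  have "Comp M (p1 (fst Y ?A') (fst Y ?B')) ?lhs =
      snd Y (Comp Gamma_op (gamma_proj1 ?A' ?B') (add_base (phi_plus f g)))"
    using xi_comp_props(1)[OF Xfg] X_arr[OF fg]
      Y_comp[OF add_base_in_Arr[OF fg] gamma_proj_in_Arr(1)] by simp
  also have "\<dots> = Comp M (p1 (fst Y ?A') (fst Y ?B')) ?rhs"
    unfolding gamma_proj1_add_base_phi_plus[OF f g] tens_comp(1) xi_props(2)
    using X_arr[OF f] Y_comp[OF gamma_proj_in_Arr(1)[of ?A ?B] add_base_in_Arr[OF f]] by simp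
  finally have p1_eq: "Comp M (p1 (fst Y ?A') (fst Y ?B')) ?lhs =
      Comp M (p1 (fst Y ?A') (fst Y ?B')) ?rhs" .
  have "Comp M (p2 (fst Y ?A') (fst Y ?B')) ?lhs =
      snd Y (Comp Gamma_op (gamma_proj2 ?A' ?B') (add_base (phi_plus f g)))"
    using xi_comp_props(2)[OF Xfg] X_arr[OF fg]
      Y_comp[OF add_base_in_Arr[OF fg] gamma_proj_in_Arr(2)] by simp
  also have "\<dots> = Comp M (p2 (fst Y ?A') (fst Y ?B')) ?rhs"
    unfolding gamma_proj2_add_base_phi_plus[OF f g] tens_comp(2) xi_props(3)
    using X_arr[OF g] Y_comp[OF gamma_proj_in_Arr(2)[of ?A ?B] add_base_in_Arr[OF g]] by simp
  finally have p2_eq: "Comp M (p2 (fst Y ?A') (fst Y ?B')) ?lhs =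
      Comp M (p2 (fst Y ?A') (fst Y ?B')) ?rhs" .
  show ?thesis
    using prod_arr_eqI[OF Y_obj Y_obj comp_in_hom[OF Xfg xi_props(1)]
        comp_in_hom[OF xi_props(1) tens(1)] p1_eq p2_eq] .
qed

lemma xi_coassoc_lhs_components:
  fixes A B C :: nat
  defines "L \<equiv> Comp M (massoc M P p1 p2 (fst Y A) (fst Y B) (fst Y C))
    (Comp M (mtens M P p1 p2 (\<xi> A B) (Ide M (fst Y C))) (\<xi> (A + B) C))"
  shows "L \<in> hom M (fst Y (A + B + C)) (P (fst Y A) (P (fst Y B) (fst Y C)))"
    "Comp M (p1 (fst Y A) (P (fst Y B) (fst Y C))) L = snd Y (gamma_proj1 A (B + C))"
    "Comp M (p1 (fst Y B) (fst Y C)) (Comp M (p2 (fst Y A) (P (fst Y B) (fst Y C))) L) =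
      snd Y (Comp Gamma_op (gamma_proj1 B C) (gamma_proj2 A (B + C)))"
    "Comp M (p2 (fst Y B) (fst Y C)) (Comp M (p2 (fst Y A) (P (fst Y B) (fst Y C))) L) =
      snd Y (gamma_proj2 (A + B) C)"
proof -
  let ?T = "mtens M P p1 p2 (\<xi> A B) (Ide M (fst Y C))"
  note tens = mtens_props[OF xi_props(1)[of A B] ide_in_hom[OF Y_obj[of C]]]
  have k: "Comp M ?T (\<xi> (A + B) C) \<in>
      hom M (fst Y (A + B + C)) (P (P (fst Y A) (fst Y B)) (fst Y C))"
    using comp_in_hom[OF xi_props(1) tens(1)] .
  note assoc = massoc_comp_props[OF k Y_obj Y_obj Y_obj]
  note tens_comp = mtens_comp_props[OF xi_props(1) xi_props(1)[of A B] ide_in_hom[OF Y_obj[of C]]]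
  have first: "Comp M (p1 (P (fst Y A) (fst Y B)) (fst Y C)) (Comp M ?T (\<xi> (A + B) C)) =
      Comp M (\<xi> A B) (snd Y (gamma_proj1 (A + B) C))"
    using tens_comp(1) xi_props(2) by simp
  show "L \<in> hom M (fst Y (A + B + C)) (P (fst Y A) (P (fst Y B) (fst Y C)))"
    unfolding L_def using comp_in_hom[OF k massoc_props(1)[OF Y_obj Y_obj Y_obj]] .
  show "Comp M (p1 (fst Y A) (P (fst Y B) (fst Y C))) L = snd Y (gamma_proj1 A (B + C))"
    unfolding L_def assoc(1) first xi_comp_props(1)[OF Y_gamma_proj_in_hom(1)]
    using Y_comp[OF gamma_proj_in_Arr(1,1)] gamma_proj1_assoc by simp
  show "Comp M (p1 (fst Y B) (fst Y C)) (Comp M (p2 (fst Y A) (P (fst Y B) (fst Y C))) L) =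
      snd Y (Comp Gamma_op (gamma_proj1 B C) (gamma_proj2 A (B + C)))"
    unfolding L_def assoc(2) first xi_comp_props(2)[OF Y_gamma_proj_in_hom(1)]
    using Y_comp[OF gamma_proj_in_Arr(1,2)] gamma_proj2_gamma_proj1 by simp
  show "Comp M (p2 (fst Y B) (fst Y C)) (Comp M (p2 (fst Y A) (P (fst Y B) (fst Y C))) L) =
      snd Y (gamma_proj2 (A + B) C)"
    unfolding L_def assoc(3) tens_comp(2) xi_props(3)
    using comp_ide_left[OF Y_gamma_proj_in_hom(2)] by simp
qed

lemma xi_coassoc_rhs_components:
  fixes A B C :: nat
  defines "R \<equiv> Comp M (mtens M P p1 p2 (Ide M (fst Y A)) (\<xi> B C)) (\<xi> A (B + C))"
  shows "R \<in> hom M (fst Y (A + B + C)) (P (fst Y A) (P (fst Y B) (fst Y C)))"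
    "Comp M (p1 (fst Y A) (P (fst Y B) (fst Y C))) R = snd Y (gamma_proj1 A (B + C))"
    "Comp M (p1 (fst Y B) (fst Y C)) (Comp M (p2 (fst Y A) (P (fst Y B) (fst Y C))) R) =
      snd Y (Comp Gamma_op (gamma_proj1 B C) (gamma_proj2 A (B + C)))"
    "Comp M (p2 (fst Y B) (fst Y C)) (Comp M (p2 (fst Y A) (P (fst Y B) (fst Y C))) R) =
      snd Y (gamma_proj2 (A + B) C)"
proof -
  note tens = mtens_props[OF ide_in_hom[OF Y_obj[of A]] xi_props(1)[of B C]]
  note tens_comp = mtens_comp_props[OF xi_props(1) ide_in_hom[OF Y_obj[of A]] xi_props(1)[of B C]]
  have second: "Comp M (p2 (fst Y A) (P (fst Y B) (fst Y C))) R =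
      Comp M (\<xi> B C) (snd Y (gamma_proj2 A (B + C)))"
    unfolding R_def using tens_comp(2) xi_props(3) by simp
  show "R \<in> hom M (fst Y (A + B + C)) (P (fst Y A) (P (fst Y B) (fst Y C)))"
    unfolding R_def using comp_in_hom[OF xi_props(1) tens(1)] by (simp add: add.assoc)
  show "Comp M (p1 (fst Y A) (P (fst Y B) (fst Y C))) R = snd Y (gamma_proj1 A (B + C))"
    unfolding R_def tens_comp(1) xi_props(2) using comp_ide_left[OF Y_gamma_proj_in_hom(1)] .
  show "Comp M (p1 (fst Y B) (fst Y C)) (Comp M (p2 (fst Y A) (P (fst Y B) (fst Y C))) R) =
      snd Y (Comp Gamma_op (gamma_proj1 B C) (gamma_proj2 A (B + C)))"
    unfolding second xi_comp_props(1)[OF Y_gamma_proj_in_hom(2)]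
    using Y_comp[OF gamma_proj_in_Arr(2,1)] by simp
  show "Comp M (p2 (fst Y B) (fst Y C)) (Comp M (p2 (fst Y A) (P (fst Y B) (fst Y C))) R) =
      snd Y (gamma_proj2 (A + B) C)"
    unfolding second xi_comp_props(2)[OF Y_gamma_proj_in_hom(2)]
    using Y_comp[OF gamma_proj_in_Arr(2,2)] gamma_proj2_assoc by simp
qed

lemma xi_coassoc:
  "Comp M (massoc M P p1 p2 (fst Y A) (fst Y B) (fst Y C))
      (Comp M (mtens M P p1 p2 (\<xi> A B) (Ide M (fst Y C))) (\<xi> (A + B) C)) =
   Comp M (mtens M P p1 p2 (Ide M (fst Y A)) (\<xi> B C)) (\<xi> A (B + C))"
proof -
  note L = xi_coassoc_lhs_components[where A = A and B = B and C = C]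
    and R = xi_coassoc_rhs_components[where A = A and B = B and C = C]
  have BC: "P (fst Y B) (fst Y C) \<in> Obj M" using prod_obj[OF Y_obj Y_obj] .
  have p2_eq: "Comp M (p2 (fst Y A) (P (fst Y B) (fst Y C))) (Comp M (massoc M P p1 p2 (fst Y A) (fst Y B) (fst Y C))
      (Comp M (mtens M P p1 p2 (\<xi> A B) (Ide M (fst Y C))) (\<xi> (A + B) C))) =
    Comp M (p2 (fst Y A) (P (fst Y B) (fst Y C)))
      (Comp M (mtens M P p1 p2 (Ide M (fst Y A)) (\<xi> B C)) (\<xi> A (B + C)))"
    by (rule prod_arr_eqI[OF Y_obj Y_obj comp_in_hom[OF L(1) p2_in_hom[OF Y_obj BC]]
        comp_in_hom[OF R(1) p2_in_hom[OF Y_obj BC]]]) (simp_all only: L(3,4) R(3,4))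
  show ?thesis by (rule prod_arr_eqI[OF Y_obj BC L(1) R(1) _ p2_eq]) (simp only: L(2) R(2))
qed

lemma xi_counit_left:
  "Comp M (p2 one (fst Y A)) (Comp M (mtens M P p1 p2 \<xi>0 (Ide M (fst Y A))) (\<xi> 0 A)) =
    Ide M (fst Y A)"
  using mtens_comp_props(2)[OF xi_props(1)[of 0 A] xi0_in_hom ide_in_hom[OF Y_obj[of A]]]
    xi_props(3) comp_ide_left[OF Y_gamma_proj_in_hom(2)[of 0 A]] gamma_proj2_zero Y_ide
  by simp

lemma xi_counit_right:
  "Comp M (p1 (fst Y A) one) (Comp M (mtens M P p1 p2 (Ide M (fst Y A)) \<xi>0) (\<xi> A 0)) =
    Ide M (fst Y A)"
  using mtens_comp_props(1)[OF xi_props(1)[of A 0] ide_in_hom[OF Y_obj[of A]] xi0_in_hom]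
    xi_props(2) comp_ide_left[OF Y_gamma_proj_in_hom(1)[of A 0]] gamma_proj1_zero Y_ide
  by simp

lemma xi_sym:
  "Comp M (msym M P p1 p2 (fst Y A) (fst Y B)) (\<xi> A B) = Comp M (\<xi> B A) (snd X (phi_swap A B))"
proof -
  have swap: "snd X (phi_swap A B) \<in> hom M (fst Y (A + B)) (fst Y (B + A))"
    using X_in_hom[OF phi_swap_in_Arr] by simp
  have Y_swap: "Comp M (snd Y (gamma_proj1 B A)) (snd X (phi_swap A B)) = snd Y (gamma_proj2 A B)"
    "Comp M (snd Y (gamma_proj2 B A)) (snd X (phi_swap A B)) = snd Y (gamma_proj1 A B)"
    using Y_comp[OF add_base_in_Arr[OF phi_swap_in_Arr[of A B]] gamma_proj_in_Arr(1)[of B A]]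
      Y_comp[OF add_base_in_Arr[OF phi_swap_in_Arr[of A B]] gamma_proj_in_Arr(2)[of B A]]
      gamma_proj1_add_base_swap gamma_proj2_add_base_swap X_arr[OF phi_swap_in_Arr] by simp_all
  show ?thesis
  proof (rule prod_arr_eqI[OF Y_obj Y_obj comp_in_hom[OF xi_props(1) msym_props(1)[OF Y_obj Y_obj]]
        comp_in_hom[OF swap xi_props(1)]])
    show "Comp M (p1 (fst Y B) (fst Y A)) (Comp M (msym M P p1 p2 (fst Y A) (fst Y B)) (\<xi> A B)) =
        Comp M (p1 (fst Y B) (fst Y A)) (Comp M (\<xi> B A) (snd X (phi_swap A B)))"
      using msym_comp_props(1)[OF xi_props(1) Y_obj Y_obj] xi_props(3) xi_comp_props(1)[OF swap]
        Y_swap(1) by simp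
    show "Comp M (p2 (fst Y B) (fst Y A)) (Comp M (msym M P p1 p2 (fst Y A) (fst Y B)) (\<xi> A B)) =
        Comp M (p2 (fst Y B) (fst Y A)) (Comp M (\<xi> B A) (snd X (phi_swap A B)))"
      using msym_comp_props(2)[OF xi_props(1) Y_obj Y_obj] xi_props(2) xi_comp_props(2)[OF swap]
        Y_swap(2) by simp
  qed
qed

lemma scolax_obj_colax_of_gamma: "scolax_obj M one P p1 p2 (colax_of_gamma M one P p1 p2 Y)"
  unfolding scolax_obj_def colax_of_gamma_def prod.case
  using X_functor X_ext xi_props(1) xi0_in_hom xi_natural xi_coassoc xi_counit_left
    xi_counit_right xi_sym
  by simp

end

context colax_functor
begin

lemma precomp_add_base_gamma_of_colax: "precomp_add_base Y = X"
proof -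
  have "snd (precomp_add_base Y) f = snd X f" for f
  proof (cases "f \<in> Arr Phi")
    case False
    moreover have "snd X f = undefined" using X_ext False unfolding ext_functor_def by blast
    ultimately show ?thesis by (simp add: precomp_add_base_def)
  next
    case True
    have "snd (precomp_add_base Y) f =
        Comp M (pi1 (Cod Phi f) 1) (snd X (phi_plus f (phi_to_one 0)))"
      using True Y_arr[OF add_base_in_Arr[OF True]] base_to_last_add_base[OF True]
      by (simp add: precomp_add_base_def)
    also have "\<dots> = Comp M (snd X f) (pi1 (Dom Phi f) 0)"
      using pi1_natural[OF True phi_to_one_in_Arr] by simp
    also have "\<dots> = snd X f" using pi1_zero comp_ide_right[OF X_in_hom[OF True]] by simp
    finally show ?thesis .
  qed
  then show ?thesis by (simp add: prod_eq_iff fun_eq_iff)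
qed

lemma Y_gamma_proj1: "snd Y (gamma_proj1 A B) = pi1 A B"
proof -
  have "snd Y (gamma_proj1 A B) = Comp M (pi1 A 1) (snd X (phi_plus (Ide Phi A) (phi_to_one B)))"
    using Y_arr[OF gamma_proj_in_Arr(1)] base_to_last_gamma_proj1 by simp
  also have "\<dots> = Comp M (snd X (Ide Phi A)) (pi1 A B)"
    using pi1_natural[OF Ide_Phi_in_Arr phi_to_one_in_Arr, of A B] by simp
  finally show ?thesis using X_ide comp_ide_left[OF pi1_in_hom] by simp
qed

lemma Y_gamma_proj2: "snd Y (gamma_proj2 A B) = pi2 A B"
proof -
  let ?p = "phi_plus (Ide Phi B) (phi_to_one A)"
  have p: "?p \<in> Arr Phi" using phi_plus_in_Arr[OF Ide_Phi_in_Arr phi_to_one_in_Arr] .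
  have Xp: "snd X ?p \<in> hom M (fst X (B + A)) (fst X (B + 1))" using X_in_hom[OF p] by simp
  have swap: "snd X (phi_swap A B) \<in> hom M (fst X (A + B)) (fst X (B + A))"
    using X_in_hom[OF phi_swap_in_Arr] by simp
  have "snd Y (gamma_proj2 A B) = Comp M (pi1 B 1) (Comp M (snd X ?p) (snd X (phi_swap A B)))"
    using Y_arr[OF gamma_proj_in_Arr(2)] base_to_last_gamma_proj2 X_comp[OF phi_swap_in_Arr p]
    by simp
  also have "\<dots> = Comp M (Comp M (snd X (Ide Phi B)) (pi1 B A)) (snd X (phi_swap A B))"
    using comp_assoc[OF swap Xp pi1_in_hom] pi1_natural[OF Ide_Phi_in_Arr phi_to_one_in_Arr, of B A]
    by simp
  also have "\<dots> = pi2 A B" using X_ide comp_ide_left[OF pi1_in_hom] pi2_eq_pi1_swap by simp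
  finally show ?thesis .
qed

lemma segal_map_gamma_of_colax: "segal_map M P p1 p2 Y = \<xi>"
  using mpair_eta[OF X_obj X_obj xi_in_hom] Y_gamma_proj1 Y_gamma_proj2
  unfolding segal_map_def colax_proj_def by (simp add: fun_eq_iff)

lemma terminal_map_gamma_of_colax: "terminal_map M one Y = \<xi>0"
  unfolding terminal_map_def using xi0_in_hom terminal_unique by simp blast

lemma colax_of_gamma_of_colax: "colax_of_gamma M one P p1 p2 Y = (X, \<xi>, \<xi>0)"
  unfolding colax_of_gamma_def
  using precomp_add_base_gamma_of_colax segal_map_gamma_of_colax terminal_map_gamma_of_colax
  by simp

end

context gamma_object
begin

lemma gamma_of_colax_of_gamma: "gamma_of_colax M p1 (colax_of_gamma M one P p1 p2 Y) = Y"
proof -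
  have "snd (gamma_of_colax M p1 (colax_of_gamma M one P p1 p2 Y)) g = snd Y g" for g
  proof (cases "g \<in> Arr Gamma_op")
    case False
    moreover have "snd Y g = undefined" using Y_ext False unfolding ext_functor_def by blast
    ultimately show ?thesis by (simp add: gamma_of_colax_def colax_of_gamma_def)
  next
    case True
    have bg: "base_to_last g \<in> Arr Phi" using base_to_last_in_Arr[OF True] .
    have "snd (gamma_of_colax M p1 (colax_of_gamma M one P p1 p2 Y)) g =
        Comp M (snd Y (gamma_proj1 (Cod Gamma_op g) 1)) (snd Y (add_base (base_to_last g)))"
      using True xi_props(2) X_arr[OF bg]
      by (simp add: gamma_of_colax_def colax_of_gamma_def colax_proj_def)
    also have "\<dots> = snd Y g"
      using Y_comp[OF add_base_in_Arr[OF bg] gamma_proj_in_Arr(1)[of "Cod Gamma_op g" 1]]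
        gamma_proj1_add_base_base_to_last[OF True] by simp
    finally show ?thesis .
  qed
  then show ?thesis
    by (simp add: prod_eq_iff fun_eq_iff gamma_of_colax_def colax_of_gamma_def)
qed

end

context cartesian_cat
begin

lemma colax_functorI: "scolax_obj M one P p1 p2 (X, \<xi>, \<xi>0) \<Longrightarrow> colax_functor M one P p1 p2 X \<xi> \<xi>0"
  unfolding colax_functor_def colax_functor_axioms_def using cartesian_cat_axioms by simp

lemma gamma_objectI:
  "is_functor Gamma_op M Y \<Longrightarrow> ext_functor Gamma_op Y \<Longrightarrow> gamma_object M one P p1 p2 Y"
  unfolding gamma_object_def gamma_object_axioms_def using cartesian_cat_axioms by simp

lemma monoidal_trans_colax_proj:
  assumes "scolax_obj M one P p1 p2 (X, \<xi>, \<xi>0)" "scolax_obj M one P p1 p2 (X', \<xi>', \<xi>0')"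
    and "monoidal_trans M P p1 p2 (X, \<xi>, \<xi>0) (X', \<xi>', \<xi>0') \<sigma>"
  shows "Comp M (colax_proj M p1 X' \<xi>' A B) (\<sigma> (A + B)) = Comp M (\<sigma> A) (colax_proj M p1 X \<xi> A B)"
proof -
  interpret W: colax_functor M one P p1 p2 X \<xi> \<xi>0 using colax_functorI[OF assms(1)] .
  interpret V: colax_functor M one P p1 p2 X' \<xi>' \<xi>0' using colax_functorI[OF assms(2)] .
  have \<sigma>: "\<sigma> a \<in> hom M (fst X a) (fst X' a)" for a
    using assms(3) unfolding monoidal_trans_def nat_trans_def by auto
  have "Comp M (colax_proj M p1 X' \<xi>' A B) (\<sigma> (A + B)) =
      Comp M (p1 (fst X' A) (fst X' B)) (Comp M (\<xi>' A B) (\<sigma> (A + B)))"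
    unfolding colax_proj_def using proj_comp_assoc(1)[OF \<sigma> V.xi_in_hom V.X_obj V.X_obj] by simp
  also have "\<dots> = Comp M (p1 (fst X' A) (fst X' B))
      (Comp M (mtens M P p1 p2 (\<sigma> A) (\<sigma> B)) (\<xi> A B))"
    using assms(3) unfolding monoidal_trans_def by auto
  also have "\<dots> = Comp M (\<sigma> A) (colax_proj M p1 X \<xi> A B)"
    unfolding colax_proj_def using mtens_comp_props(1)[OF W.xi_in_hom \<sigma> \<sigma>] .
  finally show ?thesis .
qed

lemma nat_trans_gamma_of_colax:
  assumes W: "scolax_obj M one P p1 p2 (X, \<xi>, \<xi>0)" and V: "scolax_obj M one P p1 p2 (X', \<xi>', \<xi>0')"
    and \<sigma>: "monoidal_trans M P p1 p2 (X, \<xi>, \<xi>0) (X', \<xi>', \<xi>0') \<sigma>"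
  shows "nat_trans Gamma_op M (gamma_of_colax M p1 (X, \<xi>, \<xi>0)) (gamma_of_colax M p1 (X', \<xi>', \<xi>0')) \<sigma>"
  unfolding nat_trans_def
proof (intro conjI ballI allI impI)
  interpret W: colax_functor M one P p1 p2 X \<xi> \<xi>0 using colax_functorI[OF W] .
  interpret V: colax_functor M one P p1 p2 X' \<xi>' \<xi>0' using colax_functorI[OF V] .
  have \<sigma>_nat: "nat_trans Phi M X X' \<sigma>" using \<sigma> unfolding monoidal_trans_def by simp
  then have \<sigma>_hom: "\<sigma> a \<in> hom M (fst X a) (fst X' a)" for a unfolding nat_trans_def by simp
  fix a
  show "\<sigma> a \<in> hom M (fst W.Y a) (fst V.Y a)" using \<sigma>_hom by simp
  show "a \<notin> Obj Gamma_op \<Longrightarrow> \<sigma> a = undefined" by simp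
  fix g assume g: "g \<in> Arr Gamma_op"
  let ?m = "Dom Gamma_op g" and ?n = "Cod Gamma_op g" and ?b = "base_to_last g"
  have bg: "?b \<in> Arr Phi" using base_to_last_in_Arr[OF g] .
  have "\<forall>f\<in>Arr Phi. Comp M (snd X' f) (\<sigma> (Dom Phi f)) = Comp M (\<sigma> (Cod Phi f)) (snd X f)"
    using \<sigma>_nat unfolding nat_trans_def by blast
  from bspec[OF this bg]
  have X'_b: "Comp M (snd X' ?b) (\<sigma> ?m) = Comp M (\<sigma> (?n + 1)) (snd X ?b)" by simp
  have "Comp M (snd V.Y g) (\<sigma> ?m) = Comp M (V.pi1 ?n 1) (Comp M (snd X' ?b) (\<sigma> ?m))"
    using V.Y_arr[OF g] comp_assoc[OF \<sigma>_hom V.X_base_to_last_in_hom[OF g] V.pi1_in_hom] by simp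
  also have "\<dots> = Comp M (Comp M (V.pi1 ?n 1) (\<sigma> (?n + 1))) (snd X ?b)"
    using X'_b comp_assoc[OF W.X_base_to_last_in_hom[OF g] \<sigma>_hom V.pi1_in_hom] by simp
  also have "\<dots> = Comp M (\<sigma> ?n) (snd W.Y g)"
    using monoidal_trans_colax_proj[OF W V \<sigma>, where A = ?n and B = 1] W.Y_arr[OF g]
      comp_assoc[OF W.X_base_to_last_in_hom[OF g] W.pi1_in_hom \<sigma>_hom] by simp
  finally show "Comp M (snd V.Y g) (\<sigma> (Dom Gamma_op g)) = Comp M (\<sigma> (Cod Gamma_op g)) (snd W.Y g)" .
qed

lemma monoidal_trans_colax_of_gamma:
  assumes Y: "is_functor Gamma_op M Y" "ext_functor Gamma_op Y"
    and Y': "is_functor Gamma_op M Y'" "ext_functor Gamma_op Y'"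
    and \<sigma>: "nat_trans Gamma_op M Y Y' \<sigma>"
  shows "monoidal_trans M P p1 p2 (colax_of_gamma M one P p1 p2 Y) (colax_of_gamma M one P p1 p2 Y') \<sigma>"
proof -
  interpret Y: gamma_object M one P p1 p2 Y using gamma_objectI[OF Y] .
  interpret Y': gamma_object M one P p1 p2 Y' using gamma_objectI[OF Y'] .
  have \<sigma>_hom: "\<sigma> a \<in> hom M (fst Y a) (fst Y' a)" for a using \<sigma> unfolding nat_trans_def by auto
  have \<sigma>_nat: "Comp M (snd Y' g) (\<sigma> (Dom Gamma_op g)) = Comp M (\<sigma> (Cod Gamma_op g)) (snd Y g)"
    if "g \<in> Arr Gamma_op" for g
    using \<sigma> that unfolding nat_trans_def by auto
  have "nat_trans Phi M Y.X Y'.X \<sigma>"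
    unfolding nat_trans_def using \<sigma>_hom \<sigma>_nat[OF add_base_in_Arr] Y.X_arr Y'.X_arr by simp
  moreover have "Comp M (Y'.\<xi> A B) (\<sigma> (A + B)) = Comp M (mtens M P p1 p2 (\<sigma> A) (\<sigma> B)) (Y.\<xi> A B)"
    for A B
  proof (rule prod_arr_eqI[OF Y'.Y_obj Y'.Y_obj comp_in_hom[OF \<sigma>_hom Y'.xi_props(1)]
        comp_in_hom[OF Y.xi_props(1) mtens_props(1)[OF \<sigma>_hom \<sigma>_hom]]])
    show "Comp M (p1 (fst Y' A) (fst Y' B)) (Comp M (Y'.\<xi> A B) (\<sigma> (A + B))) =
        Comp M (p1 (fst Y' A) (fst Y' B)) (Comp M (mtens M P p1 p2 (\<sigma> A) (\<sigma> B)) (Y.\<xi> A B))"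
      using Y'.xi_comp_props(1)[OF \<sigma>_hom] \<sigma>_nat[OF gamma_proj_in_Arr(1)]
        mtens_comp_props(1)[OF Y.xi_props(1) \<sigma>_hom \<sigma>_hom] Y.xi_props(2) by simp
    show "Comp M (p2 (fst Y' A) (fst Y' B)) (Comp M (Y'.\<xi> A B) (\<sigma> (A + B))) =
        Comp M (p2 (fst Y' A) (fst Y' B)) (Comp M (mtens M P p1 p2 (\<sigma> A) (\<sigma> B)) (Y.\<xi> A B))"
      using Y'.xi_comp_props(2)[OF \<sigma>_hom] \<sigma>_nat[OF gamma_proj_in_Arr(2)]
        mtens_comp_props(2)[OF Y.xi_props(1) \<sigma>_hom \<sigma>_hom] Y.xi_props(3) by simp
  qed
  moreover have "Comp M Y'.\<xi>0 (\<sigma> 0) = Y.\<xi>0"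
    using terminal_unique[OF comp_in_hom[OF \<sigma>_hom Y'.xi0_in_hom] Y.xi0_in_hom] .
  ultimately show ?thesis unfolding monoidal_trans_def colax_of_gamma_def by simp
qed

end

section \<open>The isomorphism of categories\<close>

definition colax_to_gamma ::
  "('o,'m) cat \<Rightarrow> ('o \<Rightarrow> 'o \<Rightarrow> 'm) \<Rightarrow>
    (('o,'m) colax \<Rightarrow> ('o,'m) farr_functor) \<times>
    (('o,'m) colax \<times> ('o,'m) colax \<times> (nat \<Rightarrow> 'm) \<Rightarrow>
      ('o,'m) farr_functor \<times> ('o,'m) farr_functor \<times> (nat \<Rightarrow> 'm))" where
  "colax_to_gamma M p1 =
    (gamma_of_colax M p1, \<lambda>(W, V, \<sigma>). (gamma_of_colax M p1 W, gamma_of_colax M p1 V, \<sigma>))"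

definition gamma_to_colax ::
  "('o,'m) cat \<Rightarrow> 'o \<Rightarrow> ('o \<Rightarrow> 'o \<Rightarrow> 'o) \<Rightarrow> ('o \<Rightarrow> 'o \<Rightarrow> 'm) \<Rightarrow> ('o \<Rightarrow> 'o \<Rightarrow> 'm) \<Rightarrow>
    (('o,'m) farr_functor \<Rightarrow> ('o,'m) colax) \<times>
    (('o,'m) farr_functor \<times> ('o,'m) farr_functor \<times> (nat \<Rightarrow> 'm) \<Rightarrow>
      ('o,'m) colax \<times> ('o,'m) colax \<times> (nat \<Rightarrow> 'm))" where
  "gamma_to_colax M one P p1 p2 =
    (colax_of_gamma M one P p1 p2,
     \<lambda>(Y, Y', \<sigma>). (colax_of_gamma M one P p1 p2 Y, colax_of_gamma M one P p1 p2 Y', \<sigma>))"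

lemma fst_colax_to_gamma [simp]: "fst (colax_to_gamma M p1) = gamma_of_colax M p1"
  by (simp add: colax_to_gamma_def)

lemma fst_gamma_to_colax [simp]: "fst (gamma_to_colax M one P p1 p2) = colax_of_gamma M one P p1 p2"
  by (simp add: gamma_to_colax_def)

lemma scolax_cat_simps:
  "W \<in> Obj (scolax_cat M one P p1 p2) \<longleftrightarrow> scolax_obj M one P p1 p2 W"
  "(W, V, \<sigma>) \<in> Arr (scolax_cat M one P p1 p2) \<longleftrightarrow>
    scolax_obj M one P p1 p2 W \<and> scolax_obj M one P p1 p2 V \<and> monoidal_trans M P p1 p2 W V \<sigma>"
  "Dom (scolax_cat M one P p1 p2) (W, V, \<sigma>) = W"
  "Cod (scolax_cat M one P p1 p2) (W, V, \<sigma>) = V"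
  "Ide (scolax_cat M one P p1 p2) W = (W, W, \<lambda>n. Ide M (fst (fst W) n))"
  "Comp (scolax_cat M one P p1 p2) (V', U, \<tau>) (W, V, \<sigma>) = (W, U, \<lambda>n. Comp M (\<tau> n) (\<sigma> n))"
  by (simp_all add: scolax_cat_def)

lemma funcat_simps:
  "F \<in> Obj (funcat C D) \<longleftrightarrow> is_functor C D F \<and> ext_functor C F"
  "(F, G, \<sigma>) \<in> Arr (funcat C D) \<longleftrightarrow>
    is_functor C D F \<and> ext_functor C F \<and> is_functor C D G \<and> ext_functor C G \<and> nat_trans C D F G \<sigma>"
  "Dom (funcat C D) (F, G, \<sigma>) = F"
  "Cod (funcat C D) (F, G, \<sigma>) = G"
  "Ide (funcat C D) F = (F, F, \<lambda>a. if a \<in> Obj C then Ide D (fst F a) else undefined)"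
  "Comp (funcat C D) (G', H, \<tau>) (F, G, \<sigma>) =
    (F, H, \<lambda>a. if a \<in> Obj C then Comp D (\<tau> a) (\<sigma> a) else undefined)"
  by (simp_all add: funcat_def)

context cartesian_cat
begin

lemma gamma_of_colax_in_Obj:
  "W \<in> Obj (scolax_cat M one P p1 p2) \<Longrightarrow> gamma_of_colax M p1 W \<in> Obj (funcat Gamma_op M)"
proof (cases W)
  case (fields X \<xi> \<xi>0)
  moreover assume "W \<in> Obj (scolax_cat M one P p1 p2)"
  ultimately interpret colax_functor M one P p1 p2 X \<xi> \<xi>0
    using colax_functorI by (simp add: scolax_cat_simps)
  show ?thesis using Y_functor Y_ext fields by (simp add: funcat_simps)
qed

lemma colax_of_gamma_in_Obj:
  assumes "Y \<in> Obj (funcat Gamma_op M)"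
  shows "colax_of_gamma M one P p1 p2 Y \<in> Obj (scolax_cat M one P p1 p2)"
proof -
  interpret gamma_object M one P p1 p2 Y using assms gamma_objectI by (simp add: funcat_simps)
  show ?thesis using scolax_obj_colax_of_gamma by (simp add: scolax_cat_simps)
qed

lemma colax_of_gamma_of_colax_obj:
  "W \<in> Obj (scolax_cat M one P p1 p2) \<Longrightarrow> colax_of_gamma M one P p1 p2 (gamma_of_colax M p1 W) = W"
proof (cases W)
  case (fields X \<xi> \<xi>0)
  moreover assume "W \<in> Obj (scolax_cat M one P p1 p2)"
  ultimately interpret colax_functor M one P p1 p2 X \<xi> \<xi>0
    using colax_functorI by (simp add: scolax_cat_simps)
  show ?thesis using colax_of_gamma_of_colax fields by simp
qed

lemma gamma_of_colax_of_gamma_obj: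
  assumes "Y \<in> Obj (funcat Gamma_op M)"
  shows "gamma_of_colax M p1 (colax_of_gamma M one P p1 p2 Y) = Y"
proof -
  interpret gamma_object M one P p1 p2 Y using assms gamma_objectI by (simp add: funcat_simps)
  show ?thesis using gamma_of_colax_of_gamma .
qed

lemma is_functor_colax_to_gamma:
  "is_functor (scolax_cat M one P p1 p2) (funcat Gamma_op M) (colax_to_gamma M p1)"
  unfolding is_functor_def
proof (intro conjI ballI impI)
  fix W assume "W \<in> Obj (scolax_cat M one P p1 p2)"
  then show "fst (colax_to_gamma M p1) W \<in> Obj (funcat Gamma_op M)"
    using gamma_of_colax_in_Obj by simp
next
  fix f assume f: "f \<in> Arr (scolax_cat M one P p1 p2)"
  obtain X \<xi> \<xi>0 X' \<xi>' \<xi>0' \<sigma> where f_eq: "f = ((X, \<xi>, \<xi>0), (X', \<xi>', \<xi>0'), \<sigma>)"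
    by (cases f) auto
  have "gamma_of_colax M p1 (X, \<xi>, \<xi>0) \<in> Obj (funcat Gamma_op M)"
    "gamma_of_colax M p1 (X', \<xi>', \<xi>0') \<in> Obj (funcat Gamma_op M)"
    using f f_eq gamma_of_colax_in_Obj by (auto simp: scolax_cat_simps)
  then show "snd (colax_to_gamma M p1) f \<in> hom (funcat Gamma_op M)
      (fst (colax_to_gamma M p1) (Dom (scolax_cat M one P p1 p2) f))
      (fst (colax_to_gamma M p1) (Cod (scolax_cat M one P p1 p2) f))"
    using f f_eq nat_trans_gamma_of_colax
    by (simp add: hom_def colax_to_gamma_def scolax_cat_simps funcat_simps)
next
  fix W show "snd (colax_to_gamma M p1) (Ide (scolax_cat M one P p1 p2) W) =
      Ide (funcat Gamma_op M) (fst (colax_to_gamma M p1) W)"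
    by (simp add: colax_to_gamma_def scolax_cat_simps funcat_simps)
next
  fix f g show "snd (colax_to_gamma M p1) (Comp (scolax_cat M one P p1 p2) g f) =
      Comp (funcat Gamma_op M) (snd (colax_to_gamma M p1) g) (snd (colax_to_gamma M p1) f)"
    by (cases f, cases g) (simp add: colax_to_gamma_def scolax_cat_simps funcat_simps)
qed

lemma is_functor_gamma_to_colax:
  "is_functor (funcat Gamma_op M) (scolax_cat M one P p1 p2) (gamma_to_colax M one P p1 p2)"
  unfolding is_functor_def
proof (intro conjI ballI impI)
  fix Y assume "Y \<in> Obj (funcat Gamma_op M)"
  then show "fst (gamma_to_colax M one P p1 p2) Y \<in> Obj (scolax_cat M one P p1 p2)"
    using colax_of_gamma_in_Obj by simp
next
  fix f assume f: "f \<in> Arr (funcat Gamma_op M)"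
  obtain Y Y' \<sigma> where f_eq: "f = (Y, Y', \<sigma>)" by (cases f)
  have "colax_of_gamma M one P p1 p2 Y \<in> Obj (scolax_cat M one P p1 p2)"
    "colax_of_gamma M one P p1 p2 Y' \<in> Obj (scolax_cat M one P p1 p2)"
    using f f_eq colax_of_gamma_in_Obj by (auto simp: funcat_simps)
  then show "snd (gamma_to_colax M one P p1 p2) f \<in> hom (scolax_cat M one P p1 p2)
      (fst (gamma_to_colax M one P p1 p2) (Dom (funcat Gamma_op M) f))
      (fst (gamma_to_colax M one P p1 p2) (Cod (funcat Gamma_op M) f))"
    using f f_eq monoidal_trans_colax_of_gamma
    by (simp add: hom_def gamma_to_colax_def scolax_cat_simps funcat_simps)
next
  fix Y show "snd (gamma_to_colax M one P p1 p2) (Ide (funcat Gamma_op M) Y) =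
      Ide (scolax_cat M one P p1 p2) (fst (gamma_to_colax M one P p1 p2) Y)"
    by (simp add: gamma_to_colax_def scolax_cat_simps funcat_simps colax_of_gamma_def)
next
  fix f g show "snd (gamma_to_colax M one P p1 p2) (Comp (funcat Gamma_op M) g f) =
      Comp (scolax_cat M one P p1 p2) (snd (gamma_to_colax M one P p1 p2) g)
        (snd (gamma_to_colax M one P p1 p2) f)"
    by (cases f, cases g) (simp add: gamma_to_colax_def scolax_cat_simps funcat_simps)
qed

lemma gamma_to_colax_colax_to_gamma_arr:
  assumes "f \<in> Arr (scolax_cat M one P p1 p2)"
  shows "snd (gamma_to_colax M one P p1 p2) (snd (colax_to_gamma M p1) f) = f"
proof (cases f)
  case (fields W V \<sigma>)
  then have "W \<in> Obj (scolax_cat M one P p1 p2)" "V \<in> Obj (scolax_cat M one P p1 p2)"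
    using assms by (simp_all add: scolax_cat_simps)
  then show ?thesis
    using fields colax_of_gamma_of_colax_obj by (simp add: colax_to_gamma_def gamma_to_colax_def)
qed

lemma colax_to_gamma_gamma_to_colax_arr:
  assumes "g \<in> Arr (funcat Gamma_op M)"
  shows "snd (colax_to_gamma M p1) (snd (gamma_to_colax M one P p1 p2) g) = g"
proof (cases g)
  case (fields Y Y' \<sigma>)
  then have "Y \<in> Obj (funcat Gamma_op M)" "Y' \<in> Obj (funcat Gamma_op M)"
    using assms by (simp_all add: funcat_simps)
  then show ?thesis
    using fields gamma_of_colax_of_gamma_obj by (simp add: colax_to_gamma_def gamma_to_colax_def)
qed

end

theorem proposition3p1p1:
  fixes M :: "('o,'m) cat" and one :: 'o and P :: "'o \<Rightarrow> 'o \<Rightarrow> 'o"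
    and p1 p2 :: "'o \<Rightarrow> 'o \<Rightarrow> 'm"
  assumes "category M"
    and "has_chosen_products M one P p1 p2"
  shows "iso_cat (scolax_cat M one P p1 p2) (funcat Gamma_op M)"
proof -
  interpret cartesian_cat M one P p1 p2 using assms by unfold_locales
  show ?thesis
    unfolding iso_cat_def
    using is_functor_colax_to_gamma is_functor_gamma_to_colax
      colax_of_gamma_of_colax_obj gamma_of_colax_of_gamma_obj
      gamma_to_colax_colax_to_gamma_arr colax_to_gamma_gamma_to_colax_arr
    by (intro exI[of _ "colax_to_gamma M p1"] exI[of _ "gamma_to_colax M one P p1 p2"]) simp
qed

end
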